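(* Let $({\rm X},{\sf d},{\mbox{m}})$ be a metric measure space, $({\rm Y},{\sf d}_{\rm Y},\bar y)$ a pointed separable ${\sf CAT}(0)$ space, $\Omega\subset{\rm X}$ open and $u\colon\Omega\to{\rm Y}$ a Borel map which is a representative of an element of $L^2(\Omega,{\rm Y}_{\bar y})$. Then ${\sf S}\in L^2(u^*{\rm T}_G{\rm Y},{\mbox{m}}|_\Omega)$ if and only if ${\sf S}$ is the equivalence class, up to ${\mbox{m}}$-a.e. equality, of a Borel section ${\sf T}$ of $u^*{\rm T}_G{\rm Y}$ with $\int_\Omega|{\sf T}_x|^2_{u(x)}\,{\rm d}{\mbox{m}}(x)<\infty$.
   Context: Metric measure space: complete separable metric space with nonnegative nonzero Borel measure finite on bounded sets. ${\sf CAT}(0)$: complete geodesic metric space with ${\sf d}^2(\gamma_t,a)\le(1-t){\sf d}^2(\gamma_0,a)+t{\sf d}^2(\gamma_1,a)-t(1-t){\sf d}^2(\gamma_0,\gamma_1)$ along constant speed geodesics $\gamma\colon[0,1]\to{\rm Y}$; ${\sf G}_y^z$ the unique geodesic from $y$ to $z$. $L^2(\Omega,{\rm Y}_{\bar y})$: Borel essentially separably valued maps with $\int_\Omega{\sf d}^2_{\rm Y}(u,\bar y)\,{\rm d}{\mbox{m}}<\infty$, modulo a.e. equality. Tangent cone ${\rm T}_y{\rm Y}$: completion of constant speed geodesics from $y$ modulo ${\sf d}_y(\gamma,\eta):=\lim_{t\downarrow0}{\sf d}_{\rm Y}(\gamma_t,\eta_t)/t=0$; $\gamma'_0$ the class,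 $\alpha\gamma'_0$ class of $t\mapsto\gamma_{\alpha t}$; $|v|_y={\sf d}_y(v,0_y)$; $\langle v,w\rangle_y=\frac12(|v|_y^2+|w|_y^2-{\sf d}_y^2(v,w))$. Borel structure: ${\rm T}_G{\rm Y}:=\{(y,v):v\in{\rm T}_y{\rm Y}\}$ with the smallest $\sigma$-algebra making $\pi_{\rm Y}$ Borel and $(y,v)\mapsto\langle v,({\sf G}_y^z)'_0\rangle_y$ measurable for all $z\in{\rm Y}$; $u^*{\rm T}_G{\rm Y}:=\{(x,u(x),v):x\in\Omega,v\in{\rm T}_{u(x)}{\rm Y}\}$ with the restriction of $\mathcal B({\rm X})\otimes\mathcal B({\rm T}_G{\rm Y})$; a Borel section is a measurable $x\mapsto(x,u(x),{\sf T}_x)$. $L^2(u^*{\rm T}_G{\rm Y},{\mbox{m}}|_\Omega)$: with ${\sf d}_{L^2}({\sf S}^1,{\sf S}^2)^2:=\int_\Omega{\sf d}^2_{u(x)}({\sf S}^1_x,{\sf S}^2_x)\,{\rm d}{\mbox{m}}$, it is the quotient by ${\sf d}_{L^2}=0$ of the set of sections ${\sf S}$ such that (a) for all $\alpha\ge0$ and Borel essentially separably valued $v\colon\Omega\to{\rm Y}$, $x\mapsto{\sf d}_{u(x)}({\sf S}_x,\alpha({\sf G}_{u(x)}^{v(x)})'_0)$ is Borel; (b) there are $\alpha_n\ge0$ and Borel essentially separably valued $v_n$ with ${\sf S}^n_x:=\alpha_n({\sf G}_{u(x)}^{v_n(x)})'_0$, $\sup_n{\sf d}_{L^2}({\sf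 S}^n,{\sf 0})<\infty$ (${\sf 0}$ the zero section) and ${\sf S}^n_x\to{\sf S}_x$ in ${\rm T}_{u(x)}{\rm Y}$ for every $x\in\Omega$. *)

theory Defs
  imports "HOL-Analysis.Analysis" "HOL-Probability.Probability"
begin

definition mm_space :: "'x::polish_space measure \<Rightarrow> bool" where
  "mm_space m \<longleftrightarrow> sets m = sets borel \<and> emeasure m (space m) \<noteq> 0 \<and>
     (\<forall>B \<in> sets borel. bounded B \<longrightarrow> emeasure m B < \<infinity>)"

definition cs_geodesic :: "(real \<Rightarrow> 'y::metric_space) \<Rightarrow> bool" where
  "cs_geodesic \<gamma> \<longleftrightarrow> (\<forall>s\<in>{0..1}. \<forall>t\<in>{0..1}.
      dist (\<gamma> s) (\<gamma> t) = \<bar>s - t\<bar> * dist (\<gamma> 0) (\<gamma> 1))"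

definition cat0 :: "'y::metric_space itself \<Rightarrow> bool" where
  "cat0 (_ :: 'y itself) \<longleftrightarrow>
     (\<forall>y z :: 'y. \<exists>\<gamma>. cs_geodesic \<gamma> \<and> \<gamma> 0 = y \<and> \<gamma> 1 = z) \<and>
     (\<forall>(\<gamma> :: real \<Rightarrow> 'y) a t. cs_geodesic \<gamma> \<and> t \<in> {0..1} \<longrightarrow>
        (dist (\<gamma> t) a)\<^sup>2 \<le> (1 - t) * (dist (\<gamma> 0) a)\<^sup>2 + t * (dist (\<gamma> 1) a)\<^sup>2
                              - t * (1 - t) * (dist (\<gamma> 0) (\<gamma> 1))\<^sup>2)"

text \<open>The (unique, in a CAT(0) space) geodesic from y to z on [0,1], extended
  constantly outside [0,1] so that it is uniquely determined as a function.\<close>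
definition geod :: "'y::metric_space \<Rightarrow> 'y \<Rightarrow> real \<Rightarrow> 'y" where
  "geod y z = (THE \<gamma>. cs_geodesic \<gamma> \<and> \<gamma> 0 = y \<and> \<gamma> 1 = z \<and>
                     (\<forall>t<0. \<gamma> t = y) \<and> (\<forall>t>1. \<gamma> t = z))"

text \<open>A constant speed geodesic emanating from y (only its germ at 0 matters):
  a curve which is a constant speed geodesic on some interval [0,e], e>0.\<close>
definition geod_from :: "'y::metric_space \<Rightarrow> (real \<Rightarrow> 'y) \<Rightarrow> bool" where
  "geod_from y \<gamma> \<longleftrightarrow> \<gamma> 0 = y \<and> (\<exists>e>0. \<exists>c\<ge>0. \<forall>s\<in>{0..e}. \<forall>t\<in>{0..e}.
      dist (\<gamma> s) (\<gamma> t) = c * \<bar>s - t\<bar>)"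

definition dgerm :: "(real \<Rightarrow> 'y::metric_space) \<Rightarrow> (real \<Rightarrow> 'y) \<Rightarrow> real" where
  "dgerm \<gamma> \<eta> = Lim (at_right 0) (\<lambda>t. dist (\<gamma> t) (\<eta> t) / t)"

text \<open>Elements of the tangent cone T_y Y are represented via the standard
  completion construction: Cauchy sequences (w.r.t. d_y) of geodesics from y;
  two representatives denote the same element iff their tangent distance is 0.\<close>
type_synonym 'y tvec = "nat \<Rightarrow> real \<Rightarrow> 'y"

definition tcone :: "'y::metric_space \<Rightarrow> 'y tvec set" where
  "tcone y = {v. (\<forall>n. geod_from y (v n)) \<and>
      (\<forall>e>0. \<exists>N. \<forall>m\<ge>N. \<forall>n\<ge>N. dgerm (v m) (v n) < e)}"

definition tdist :: "'y::metric_space \<Rightarrow> 'y tvec \<Rightarrow> 'y tvec \<Rightarrow> real" where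
  "tdist y v w = lim (\<lambda>n. dgerm (v n) (w n))"

definition tv_of :: "(real \<Rightarrow> 'y) \<Rightarrow> 'y tvec" where
  "tv_of \<gamma> = (\<lambda>n. \<gamma>)"

text \<open>alpha (G_y^z)'_0 : class of t \<mapsto> G_y^z(alpha t).\<close>
definition tdir :: "real \<Rightarrow> 'y::metric_space \<Rightarrow> 'y \<Rightarrow> 'y tvec" where
  "tdir \<alpha> y z = tv_of (\<lambda>t. geod y z (\<alpha> * t))"

definition tzero :: "'y \<Rightarrow> 'y tvec" where
  "tzero y = tv_of (\<lambda>t. y)"

definition tnorm :: "'y::metric_space \<Rightarrow> 'y tvec \<Rightarrow> real" where
  "tnorm y v = tdist y v (tzero y)"

definition tinner :: "'y::metric_space \<Rightarrow> 'y tvec \<Rightarrow> 'y tvec \<Rightarrow> real" where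
  "tinner y v w = ((tnorm y v)\<^sup>2 + (tnorm y w)\<^sup>2 - (tdist y v w)\<^sup>2) / 2"

definition TG :: "('y::metric_space \<times> 'y tvec) set" where
  "TG = {(y, v). v \<in> tcone y}"

definition TG_measure :: "('y::metric_space \<times> 'y tvec) measure" where
  "TG_measure = sigma TG
     ({fst -` B \<inter> TG | B. B \<in> sets (borel :: 'y measure)} \<union>
      {(\<lambda>(y, v). tinner y v (tdir 1 y z)) -` A \<inter> TG | z A. A \<in> sets (borel :: real measure)})"

definition pullback_set ::
    "('x \<Rightarrow> 'y::metric_space) \<Rightarrow> 'x set \<Rightarrow> ('x \<times> 'y \<times> 'y tvec) set" where
  "pullback_set u \<Omega> = {(x, u x, v) | x v. x \<in> \<Omega> \<and> v \<in> tcone (u x)}"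

definition pullback_measure ::
    "('x::topological_space \<Rightarrow> 'y::metric_space) \<Rightarrow> 'x set \<Rightarrow> ('x \<times> 'y \<times> 'y tvec) measure" where
  "pullback_measure u \<Omega> = restrict_space (borel \<Otimes>\<^sub>M TG_measure) (pullback_set u \<Omega>)"

definition borel_section ::
    "('x::topological_space \<Rightarrow> 'y::metric_space) \<Rightarrow> 'x set \<Rightarrow> ('x \<Rightarrow> 'y tvec) \<Rightarrow> bool" where
  "borel_section u \<Omega> T \<longleftrightarrow>
     (\<lambda>x. (x, u x, T x)) \<in> measurable (restrict_space borel \<Omega>) (pullback_measure u \<Omega>)"

definition ess_sep_valued :: "'x measure \<Rightarrow> 'x set \<Rightarrow> ('x \<Rightarrow> 'y::metric_space) \<Rightarrow> bool" where
  "ess_sep_valued m \<Omega> v \<longleftrightarrow> (\<exists>N \<in> null_sets m.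
      separable_space (subtopology euclidean (v ` (\<Omega> - N))))"

definition borel_esv :: "'x::topological_space measure \<Rightarrow> 'x set \<Rightarrow> ('x \<Rightarrow> 'y::metric_space) \<Rightarrow> bool" where
  "borel_esv m \<Omega> v \<longleftrightarrow> v \<in> borel_measurable (restrict_space borel \<Omega>) \<and> ess_sep_valued m \<Omega> v"

definition L2_map :: "'x::topological_space measure \<Rightarrow> 'x set \<Rightarrow> 'y::metric_space \<Rightarrow> ('x \<Rightarrow> 'y) \<Rightarrow> bool" where
  "L2_map m \<Omega> ybar u \<longleftrightarrow> borel_esv m \<Omega> u \<and>
     (\<integral>\<^sup>+ x. ennreal ((dist (u x) ybar)\<^sup>2) \<partial>(restrict_space m \<Omega>)) < \<infinity>"

definition dL2sq :: "'x measure \<Rightarrow> 'x set \<Rightarrow> ('x \<Rightarrow> 'y::metric_space) \<Rightarrow>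
    ('x \<Rightarrow> 'y tvec) \<Rightarrow> ('x \<Rightarrow> 'y tvec) \<Rightarrow> ennreal" where
  "dL2sq m \<Omega> u S1 S2 = (\<integral>\<^sup>+ x. ennreal ((tdist (u x) (S1 x) (S2 x))\<^sup>2) \<partial>(restrict_space m \<Omega>))"

definition L2_section_rep :: "'x::topological_space measure \<Rightarrow> 'x set \<Rightarrow> ('x \<Rightarrow> 'y::metric_space) \<Rightarrow>
    ('x \<Rightarrow> 'y tvec) \<Rightarrow> bool" where
  "L2_section_rep m \<Omega> u S \<longleftrightarrow>
     (\<forall>x\<in>\<Omega>. S x \<in> tcone (u x)) \<and>
     (\<forall>\<alpha>\<ge>0. \<forall>v. borel_esv m \<Omega> v \<longrightarrow>
        (\<lambda>x. tdist (u x) (S x) (tdir \<alpha> (u x) (v x))) \<in> borel_measurable (restrict_space borel \<Omega>)) \<and>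
     (\<exists>(\<alpha> :: nat \<Rightarrow> real) (vs :: nat \<Rightarrow> 'x \<Rightarrow> 'y).
        (\<forall>n. \<alpha> n \<ge> 0 \<and> borel_esv m \<Omega> (vs n)) \<and>
        (SUP n. dL2sq m \<Omega> u (\<lambda>x. tdir (\<alpha> n) (u x) (vs n x)) (\<lambda>x. tzero (u x))) < \<infinity> \<and>
        (\<forall>x\<in>\<Omega>. (\<lambda>n. tdist (u x) (tdir (\<alpha> n) (u x) (vs n x)) (S x)) \<longlonglongrightarrow> 0))"

definition ae_eq_section :: "'x measure \<Rightarrow> 'x set \<Rightarrow> ('x \<Rightarrow> 'y::metric_space) \<Rightarrow>
    ('x \<Rightarrow> 'y tvec) \<Rightarrow> ('x \<Rightarrow> 'y tvec) \<Rightarrow> bool" where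
  "ae_eq_section m \<Omega> u S T \<longleftrightarrow> (AE x in restrict_space m \<Omega>. tdist (u x) (S x) (T x) = 0)"

end

theory Submission
  imports Defs
begin

text \<open>In a CAT(0) space the comparison angle between two geodesics issuing from \<open>y\<close> is
  monotone, so for geodesic germs \<open>\<gamma>\<close>, \<open>\<eta>\<close> of speeds \<open>a\<close>, \<open>b\<close> the quotient
  \<open>d(\<gamma>\<^sub>t, \<eta>\<^sub>\<alpha>\<^sub>t) / t\<close> converges to \<open>sqrt (a\<^sup>2 + \<alpha>\<^sup>2 b\<^sup>2 - 2 \<alpha> L)\<close>.
  This cosine law expresses \<open>d\<^sub>y(v, \<alpha> (G\<^sub>y\<^sup>z)'\<^sub>0)\<close> through \<open>|v|\<close>, \<open>\<alpha>\<close>, \<open>d(y, z)\<close> and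
  \<open>\<langle>v, (G\<^sub>y\<^sup>z)'\<^sub>0\<rangle>\<close>. Hence, for a section \<open>T\<close>, measurability of
  \<open>x \<mapsto> \<langle>T\<^sub>x, (G\<^bsub>u(x)\<^esub>\<^sup>z)'\<^sub>0\<rangle>\<close> for constant \<open>z\<close> (i.e. \<open>T\<close> is a Borel section)
  already gives condition (a): constants pass to Borel maps \<open>v\<close> by Lipschitz dependence on \<open>z\<close> and
  a countable dense set, and \<open>|T|\<^sup>2\<close> is a countable supremum. Conversely (a) recovers the inner
  products from distances. Since the directions \<open>n (G\<^sub>y\<^sup>z)'\<^sub>0\<close>, \<open>z\<close> in a dense sequence, are dense
  in \<open>T\<^sub>yY\<close> for all large \<open>n\<close>, a measurable choice of nearly optimal directions yields the
  approximations of (b), with norms at most \<open>3 |T|\<close>; in the other direction Fatou's lemma bounds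
  \<open>\<integral> |T|\<^sup>2\<close>. Separability of \<open>Y\<close> makes every Borel map essentially separably valued.\<close>

section \<open>Geodesics in CAT(0) spaces\<close>

lemma cat0_geodesic_exists:
  assumes "cat0 TYPE('y::metric_space)"
  obtains \<gamma> where "cs_geodesic \<gamma>" "\<gamma> 0 = (y::'y)" "\<gamma> 1 = z"
  using assms unfolding cat0_def by blast

lemma cat0_comparison:
  assumes "cat0 TYPE('y::metric_space)" "cs_geodesic (\<gamma>::real \<Rightarrow> 'y)" "t \<in> {0..1}"
  shows "(dist (\<gamma> t) a)\<^sup>2 \<le> (1 - t) * (dist (\<gamma> 0) a)\<^sup>2 + t * (dist (\<gamma> 1) a)\<^sup>2
                              - t * (1 - t) * (dist (\<gamma> 0) (\<gamma> 1))\<^sup>2"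
  using assms unfolding cat0_def by blast

lemma cs_geodesic_dist:
  assumes "cs_geodesic \<gamma>" "s \<in> {0..1}" "t \<in> {0..1}"
  shows "dist (\<gamma> s) (\<gamma> t) = \<bar>s - t\<bar> * dist (\<gamma> 0) (\<gamma> 1)"
  using assms unfolding cs_geodesic_def by blast

lemma cs_geodesic_unique:
  assumes c: "cat0 TYPE('y::metric_space)" and g: "cs_geodesic (\<gamma>::real \<Rightarrow> 'y)"
    and h: "cs_geodesic \<eta>" and e0: "\<gamma> 0 = \<eta> 0" and e1: "\<gamma> 1 = \<eta> 1" and t: "t \<in> {0..1}"
  shows "\<gamma> t = \<eta> t"
proof -
  define D where "D = dist (\<eta> 0) (\<eta> 1)"
  have d1: "dist (\<gamma> 0) (\<eta> t) = t * D"
    using cs_geodesic_dist[OF h, of 0 t] t e0 unfolding D_def by auto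
  have d2: "dist (\<gamma> 1) (\<eta> t) = (1 - t) * D"
    using cs_geodesic_dist[OF h, of 1 t] t e1 unfolding D_def by auto
  have d3: "dist (\<gamma> 0) (\<gamma> 1) = D" using e0 e1 D_def by simp
  have "(dist (\<gamma> t) (\<eta> t))\<^sup>2 \<le> (1 - t) * (t * D)\<^sup>2 + t * ((1 - t) * D)\<^sup>2 - t * (1 - t) * D\<^sup>2"
    using cat0_comparison[OF c g t, of "\<eta> t"] d1 d2 d3 by simp
  also have "\<dots> = 0" by (simp add: algebra_simps power2_eq_square)
  finally show ?thesis by simp
qed

lemma geod_spec:
  assumes c: "cat0 TYPE('y::metric_space)"
  shows "cs_geodesic (geod y z)" and "geod y z 0 = (y::'y)" and "geod y z 1 = z"
    and "\<forall>t<0. geod y z t = y" and "\<forall>t>1. geod y z t = z"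
proof -
  let ?P = "\<lambda>\<gamma>. cs_geodesic \<gamma> \<and> \<gamma> 0 = y \<and> \<gamma> 1 = z \<and> (\<forall>t<0. \<gamma> t = y) \<and> (\<forall>t>1. \<gamma> t = z)"
  obtain \<gamma> where g: "cs_geodesic \<gamma>" "\<gamma> 0 = y" "\<gamma> 1 = z" using cat0_geodesic_exists[OF c] .
  define \<delta> where "\<delta> = (\<lambda>t. \<gamma> (max 0 (min 1 t)))"
  have \<delta>\<gamma>: "\<delta> t = \<gamma> t" if "t \<in> {0..1}" for t using that unfolding \<delta>_def by simp
  have "cs_geodesic \<delta>"
    unfolding cs_geodesic_def
  proof (intro ballI)
    fix s t :: real assume "s \<in> {0..1}" "t \<in> {0..1}"
    then show "dist (\<delta> s) (\<delta> t) = \<bar>s - t\<bar> * dist (\<delta> 0) (\<delta> 1)"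
      using \<delta>\<gamma>[of s] \<delta>\<gamma>[of t] \<delta>\<gamma>[of 0] \<delta>\<gamma>[of 1] cs_geodesic_dist[OF g(1), of s t] by simp
  qed
  then have P: "?P \<delta>" using g(2,3) unfolding \<delta>_def by simp
  have "\<xi> = \<delta>" if "?P \<xi>" for \<xi>
  proof
    fix t :: real
    consider "t < 0" | "t > 1" | "t \<in> {0..1}" by force
    then show "\<xi> t = \<delta> t"
      using that P cs_geodesic_unique[OF c, of \<xi> \<delta> t] by cases auto
  qed
  then have "geod y z = \<delta>" unfolding geod_def using P by (rule the_equality[where P = ?P, rotated])
  then show "cs_geodesic (geod y z)" "geod y z 0 = y" "geod y z 1 = z"
    "\<forall>t<0. geod y z t = y" "\<forall>t>1. geod y z t = z"
    using P by simp_all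
qed

lemma geod_dist:
  assumes "cat0 TYPE('y::metric_space)" "s \<in> {0..1}" "t \<in> {0..1}"
  shows "dist (geod y z s) (geod y z t) = \<bar>s - t\<bar> * dist (y::'y) z"
  using cs_geodesic_dist[of "geod y z" s t] geod_spec[OF assms(1), of y z] assms by auto

lemma geod_unique:
  assumes "cat0 TYPE('y::metric_space)" "cs_geodesic \<gamma>" "\<gamma> 0 = (y::'y)" "\<gamma> 1 = z" "t \<in> {0..1}"
  shows "geod y z t = \<gamma> t"
  using cs_geodesic_unique[OF assms(1), of "geod y z" \<gamma> t] geod_spec[OF assms(1), of y z] assms by auto

lemma geod_self:
  assumes c: "cat0 TYPE('y::metric_space)"
  shows "geod (y::'y) y t = y"
proof (cases "t \<in> {0..1}")
  case True
  then show ?thesis using geod_dist[OF c True, of 0 y y] geod_spec(2)[OF c, of y y] by simp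
next
  case False
  then show ?thesis using geod_spec(4,5)[OF c, of y y] by (auto simp: not_le)
qed

section \<open>Angle monotonicity for geodesic germs\<close>

definition geodesic_germ :: "'y::metric_space \<Rightarrow> (real \<Rightarrow> 'y) \<Rightarrow> real \<Rightarrow> real \<Rightarrow> bool" where
  "geodesic_germ y \<gamma> a e \<longleftrightarrow> \<gamma> 0 = y \<and> 0 < e \<and> 0 \<le> a \<and>
     (\<forall>s\<in>{0..e}. \<forall>t\<in>{0..e}. dist (\<gamma> s) (\<gamma> t) = a * \<bar>s - t\<bar>)"

lemma geod_from_geodesic_germE:
  assumes "geod_from y \<gamma>"
  obtains a e where "geodesic_germ y \<gamma> a e"
  using assms unfolding geod_from_def geodesic_germ_def by (metis mult.commute)

lemma geodesic_germ_imp_geod_from: "geodesic_germ y \<gamma> a e \<Longrightarrow> geod_from y \<gamma>"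
  unfolding geod_from_def geodesic_germ_def by (metis mult.commute)

lemma geodesic_germ_dist:
  "geodesic_germ y \<gamma> a e \<Longrightarrow> s \<in> {0..e} \<Longrightarrow> t \<in> {0..e} \<Longrightarrow> dist (\<gamma> s) (\<gamma> t) = a * \<bar>s - t\<bar>"
  unfolding geodesic_germ_def by blast

lemma geodesic_germ_0: "geodesic_germ y \<gamma> a e \<Longrightarrow> \<gamma> 0 = y"
  unfolding geodesic_germ_def by blast

lemma geodesic_germ_pos: "geodesic_germ y \<gamma> a e \<Longrightarrow> 0 < e \<and> 0 \<le> a"
  unfolding geodesic_germ_def by blast

lemma geodesic_germ_dist_0: "geodesic_germ y \<gamma> a e \<Longrightarrow> t \<in> {0..e} \<Longrightarrow> dist y (\<gamma> t) = a * t"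
  using geodesic_germ_dist[of y \<gamma> a e 0 t] geodesic_germ_0[of y \<gamma> a e] geodesic_germ_pos[of y \<gamma> a e]
  by auto

lemma geodesic_germ_const: "geodesic_germ y (\<lambda>t. y) 0 1"
  unfolding geodesic_germ_def by auto

lemma geodesic_germ_geod: "cat0 TYPE('y::metric_space) \<Longrightarrow> geodesic_germ (y::'y) (geod y z) (dist y z) 1"
  unfolding geodesic_germ_def using geod_dist[of s t y z for s t] geod_spec(2)
  by (auto simp: mult.commute)

lemma geodesic_germ_scale:
  assumes g: "geodesic_germ y \<eta> b e" and al: "0 \<le> \<alpha>"
  shows "geodesic_germ y (\<lambda>t. \<eta> (\<alpha> * t)) (\<alpha> * b) (e / (\<alpha> + 1))"
  unfolding geodesic_germ_def
proof (intro conjI ballI)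
  show "\<eta> (\<alpha> * 0) = y" "0 < e / (\<alpha> + 1)" "0 \<le> \<alpha> * b"
    using geodesic_germ_0[OF g] geodesic_germ_pos[OF g] al by simp_all
  have scaled: "\<alpha> * r \<in> {0..e}" if "r \<in> {0..e / (\<alpha> + 1)}" for r
  proof -
    have "\<alpha> * r \<le> \<alpha> * (e / (\<alpha> + 1))" using that al by (intro mult_left_mono) auto
    also have "\<dots> \<le> e" using geodesic_germ_pos[OF g] al by (simp add: field_simps)
    finally show ?thesis using that al by auto
  qed
  fix s t assume "s \<in> {0..e / (\<alpha> + 1)}" "t \<in> {0..e / (\<alpha> + 1)}"
  then have "dist (\<eta> (\<alpha> * s)) (\<eta> (\<alpha> * t)) = b * \<bar>\<alpha> * s - \<alpha> * t\<bar>"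
    using geodesic_germ_dist[OF g] scaled by blast
  also have "\<dots> = \<alpha> * b * \<bar>s - t\<bar>" using al by (simp add: right_diff_distrib[symmetric] abs_mult)
  finally show "dist (\<eta> (\<alpha> * s)) (\<eta> (\<alpha> * t)) = \<alpha> * b * \<bar>s - t\<bar>" .
qed

lemma geodesic_germ_rescale:
  assumes g: "geodesic_germ y \<gamma> a e" and h: "0 < h" "h \<le> e"
  shows "cs_geodesic (\<lambda>r. \<gamma> (h * r))"
  unfolding cs_geodesic_def
proof (intro ballI)
  have scaled: "h * r \<in> {0..e}" if "r \<in> {0..1}" for r
  proof -
    have "h * r \<le> h * 1" using that h by (intro mult_left_mono) auto
    then have "h * r \<le> e" using h by linarith
    then show ?thesis using that h by simp
  qed
  fix s t :: real assume s: "s \<in> {0..1}" and t: "t \<in> {0..1}"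
  have "dist (\<gamma> (h * s)) (\<gamma> (h * t)) = a * \<bar>h * s - h * t\<bar>"
    using geodesic_germ_dist[OF g scaled[OF s] scaled[OF t]] .
  also have "\<dots> = \<bar>s - t\<bar> * (a * h)" using h by (simp add: right_diff_distrib[symmetric] abs_mult)
  also have "a * h = dist (\<gamma> (h * 0)) (\<gamma> (h * 1))"
    using geodesic_germ_dist[OF g, of 0 h] h geodesic_germ_pos[OF g] by auto
  finally show "dist (\<gamma> (h * s)) (\<gamma> (h * t)) = \<bar>s - t\<bar> * dist (\<gamma> (h * 0)) (\<gamma> (h * 1))" .
qed

lemma geodesic_germ_comparison:
  assumes c: "cat0 TYPE('y::metric_space)" and g: "geodesic_germ (y::'y) \<gamma> a e"
    and s: "0 < s" "s \<le> s'" "s' \<le> e"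
  shows "s' * (dist (\<gamma> s) q)\<^sup>2 \<le> (s' - s) * (dist y q)\<^sup>2 + s * (dist (\<gamma> s') q)\<^sup>2
            - s * (s' - s) * a\<^sup>2 * s'"
proof -
  define l where "l = s / s'"
  have sp: "0 < s'" using s by simp
  have l: "l \<in> {0..1}" using s unfolding l_def by auto
  have "s' * l = s" using sp unfolding l_def by simp
  moreover have "\<gamma> (s' * 0) = y" using geodesic_germ_0[OF g] by simp
  moreover have "dist (\<gamma> (s' * 0)) (\<gamma> (s' * 1)) = a * s'"
    using geodesic_germ_dist_0[OF g, of s'] geodesic_germ_0[OF g] s by simp
  ultimately have "(dist (\<gamma> s) q)\<^sup>2 \<le> (1 - l) * (dist y q)\<^sup>2 + l * (dist (\<gamma> s') q)\<^sup>2 - l * (1 - l) * (a * s')\<^sup>2"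
    using cat0_comparison[OF c geodesic_germ_rescale[OF g sp s(3)] l, of q] by simp
  then have "s' * (dist (\<gamma> s) q)\<^sup>2 \<le> s' * ((1 - l) * (dist y q)\<^sup>2 + l * (dist (\<gamma> s') q)\<^sup>2 - l * (1 - l) * (a * s')\<^sup>2)"
    using sp by (simp add: mult_left_mono)
  also have "\<dots> = (s' - s) * (dist y q)\<^sup>2 + s * (dist (\<gamma> s') q)\<^sup>2 - s * (s' - s) * a\<^sup>2 * s'"
    using sp unfolding l_def by (simp add: field_simps power2_eq_square)
  finally show ?thesis .
qed

text \<open>For germs \<open>\<gamma>\<close>, \<open>\<eta>\<close> of speeds \<open>a\<close>, \<open>b\<close> this is \<open>a b\<close> times the cosine of the Euclidean
  comparison angle at \<open>y\<close> of the triangle \<open>y, \<gamma> s, \<eta> t\<close>.\<close>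
definition comparison_inner ::
    "(real \<Rightarrow> 'y::metric_space) \<Rightarrow> (real \<Rightarrow> 'y) \<Rightarrow> real \<Rightarrow> real \<Rightarrow> real \<Rightarrow> real \<Rightarrow> real" where
  "comparison_inner \<gamma> \<eta> a b s t = (a\<^sup>2 * s\<^sup>2 + b\<^sup>2 * t\<^sup>2 - (dist (\<gamma> s) (\<eta> t))\<^sup>2) / (2 * s * t)"

lemma comparison_inner_sym: "comparison_inner \<gamma> \<eta> a b s t = comparison_inner \<eta> \<gamma> b a t s"
  unfolding comparison_inner_def by (simp add: dist_commute algebra_simps)

lemma dist_ratio_sq_comparison_inner:
  assumes "0 < t" "0 < \<alpha>"
  shows "(dist (\<gamma> t) (\<eta> (\<alpha> * t)) / t)\<^sup>2 = a\<^sup>2 + \<alpha>\<^sup>2 * b\<^sup>2 - 2 * \<alpha> * comparison_inner \<gamma> \<eta> a b t (\<alpha> * t)"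
  using assms unfolding comparison_inner_def by (simp add: field_simps power2_eq_square)

lemma comparison_inner_antimono_left:
  assumes c: "cat0 TYPE('y::metric_space)"
    and g: "geodesic_germ (y::'y) \<gamma> a e1" and h: "geodesic_germ y \<eta> b e2"
    and s: "0 < s" "s \<le> s'" "s' \<le> e1" and t: "0 < t" "t \<le> e2"
  shows "comparison_inner \<gamma> \<eta> a b s' t \<le> comparison_inner \<gamma> \<eta> a b s t"
proof -
  define D where "D = dist (\<gamma> s) (\<eta> t)"
  define D' where "D' = dist (\<gamma> s') (\<eta> t)"
  have "dist y (\<eta> t) = b * t" using geodesic_germ_dist_0[OF h, of t] t by simp
  then have "s' * D\<^sup>2 \<le> (s' - s) * (b * t)\<^sup>2 + s * D'\<^sup>2 - s * (s' - s) * a\<^sup>2 * s'"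
    using geodesic_germ_comparison[OF c g s, of "\<eta> t"] unfolding D_def D'_def by simp
  moreover have "s' * (a\<^sup>2 * s\<^sup>2 + b\<^sup>2 * t\<^sup>2 - D\<^sup>2) - s * (a\<^sup>2 * s'\<^sup>2 + b\<^sup>2 * t\<^sup>2 - D'\<^sup>2)
      = ((s' - s) * (b * t)\<^sup>2 + s * D'\<^sup>2 - s * (s' - s) * a\<^sup>2 * s') - s' * D\<^sup>2"
    by (simp add: algebra_simps power2_eq_square)
  ultimately have key: "s * (a\<^sup>2 * s'\<^sup>2 + b\<^sup>2 * t\<^sup>2 - D'\<^sup>2) \<le> s' * (a\<^sup>2 * s\<^sup>2 + b\<^sup>2 * t\<^sup>2 - D\<^sup>2)"
    by linarith
  have "comparison_inner \<gamma> \<eta> a b s' t = (s * (a\<^sup>2 * s'\<^sup>2 + b\<^sup>2 * t\<^sup>2 - D'\<^sup>2)) / (2 * s * s' * t)"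
    unfolding comparison_inner_def D'_def using s t by (simp add: field_simps)
  also have "\<dots> \<le> (s' * (a\<^sup>2 * s\<^sup>2 + b\<^sup>2 * t\<^sup>2 - D\<^sup>2)) / (2 * s * s' * t)"
    using key s t by (intro divide_right_mono) auto
  also have "\<dots> = comparison_inner \<gamma> \<eta> a b s t"
    unfolding comparison_inner_def D_def using s t by (simp add: field_simps)
  finally show ?thesis .
qed

lemma comparison_inner_antimono_right:
  assumes c: "cat0 TYPE('y::metric_space)"
    and g: "geodesic_germ (y::'y) \<gamma> a e1" and h: "geodesic_germ y \<eta> b e2"
    and s: "0 < s" "s \<le> e1" and t: "0 < t" "t \<le> t'" "t' \<le> e2"
  shows "comparison_inner \<gamma> \<eta> a b s t' \<le> comparison_inner \<gamma> \<eta> a b s t"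
  using comparison_inner_antimono_left[OF c h g t s] comparison_inner_sym[of \<gamma> \<eta> a b s]
  by simp

lemma comparison_inner_diag_le:
  assumes c: "cat0 TYPE('y::metric_space)"
    and g: "geodesic_germ (y::'y) \<gamma> a e1" and h: "geodesic_germ y \<eta> b e2"
    and "0 < s" "s \<le> m" "0 < t" "t \<le> m" "m \<le> e1" "m \<le> e2"
  shows "comparison_inner \<gamma> \<eta> a b m m \<le> comparison_inner \<gamma> \<eta> a b s t"
proof -
  have "comparison_inner \<gamma> \<eta> a b m m \<le> comparison_inner \<gamma> \<eta> a b m t"
    by (rule comparison_inner_antimono_right[OF c g h]) (use assms in auto)
  also have "\<dots> \<le> comparison_inner \<gamma> \<eta> a b s t"
    by (rule comparison_inner_antimono_left[OF c g h]) (use assms in auto)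
  finally show ?thesis .
qed

lemma comparison_inner_le_diag:
  assumes c: "cat0 TYPE('y::metric_space)"
    and g: "geodesic_germ (y::'y) \<gamma> a e1" and h: "geodesic_germ y \<eta> b e2"
    and "0 < s" "s \<le> e1" "0 < t" "t \<le> e2"
  shows "comparison_inner \<gamma> \<eta> a b s t \<le> comparison_inner \<gamma> \<eta> a b (min s t) (min s t)"
proof -
  have "comparison_inner \<gamma> \<eta> a b s t \<le> comparison_inner \<gamma> \<eta> a b (min s t) t"
    by (rule comparison_inner_antimono_left[OF c g h]) (use assms in auto)
  also have "\<dots> \<le> comparison_inner \<gamma> \<eta> a b (min s t) (min s t)"
    by (rule comparison_inner_antimono_right[OF c g h]) (use assms in auto)
  finally show ?thesis .
qed

lemma comparison_inner_le_mult:
  assumes g: "geodesic_germ (y::'y::metric_space) \<gamma> a e1" and h: "geodesic_germ y \<eta> b e2"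
    and s: "0 < s" "s \<le> e1" and t: "0 < t" "t \<le> e2"
  shows "comparison_inner \<gamma> \<eta> a b s t \<le> a * b"
proof -
  define D where "D = dist (\<gamma> s) (\<eta> t)"
  have "dist y (\<gamma> s) = a * s" "dist y (\<eta> t) = b * t"
    using geodesic_germ_dist_0[OF g, of s] geodesic_germ_dist_0[OF h, of t] s t by simp_all
  moreover have "dist y (\<gamma> s) \<le> dist y (\<eta> t) + D" "dist y (\<eta> t) \<le> dist y (\<gamma> s) + D"
    unfolding D_def by (metis dist_commute dist_triangle)+
  ultimately have "\<bar>a * s - b * t\<bar> \<le> D" by linarith
  then have "(a * s - b * t)\<^sup>2 \<le> D\<^sup>2"
    by (metis abs_ge_zero power2_abs power_mono)
  then have "a\<^sup>2 * s\<^sup>2 + b\<^sup>2 * t\<^sup>2 - D\<^sup>2 \<le> (a * b) * (2 * s * t)"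
    by (simp add: algebra_simps power2_eq_square)
  then show ?thesis unfolding comparison_inner_def D_def[symmetric] using s t
    by (simp add: divide_le_eq)
qed

lemma comparison_inner_tendsto:
  assumes c: "cat0 TYPE('y::metric_space)"
    and g: "geodesic_germ (y::'y) \<gamma> a e1" and h: "geodesic_germ y \<eta> b e2" and al: "0 < \<alpha>"
  defines "L \<equiv> (SUP r\<in>{0<..min e1 e2}. comparison_inner \<gamma> \<eta> a b r r)"
  shows "((\<lambda>t. comparison_inner \<gamma> \<eta> a b t (\<alpha> * t)) \<longlongrightarrow> L) (at_right 0)" and "L \<le> a * b"
proof -
  define e where "e = min e1 e2"
  have ep: "0 < e" using geodesic_germ_pos[OF g] geodesic_germ_pos[OF h] unfolding e_def by simp
  have bd: "comparison_inner \<gamma> \<eta> a b r r \<le> a * b" if "r \<in> {0<..e}" for r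
    using comparison_inner_le_mult[OF g h, of r r] that unfolding e_def by auto
  then have bdd: "bdd_above ((\<lambda>r. comparison_inner \<gamma> \<eta> a b r r) ` {0<..e})" by (intro bdd_aboveI2)
  show "L \<le> a * b" unfolding L_def e_def[symmetric] using bd ep by (intro cSUP_least) auto
  show "((\<lambda>t. comparison_inner \<gamma> \<eta> a b t (\<alpha> * t)) \<longlongrightarrow> L) (at_right 0)"
    unfolding order_tendsto_iff eventually_at_right_field
  proof (intro conjI allI impI)
    fix l assume "l < L"
    then obtain r where r: "r \<in> {0<..e}" "l < comparison_inner \<gamma> \<eta> a b r r"
      unfolding L_def e_def[symmetric] using less_cSUP_iff[OF _ bdd] ep by fastforce
    show "\<exists>d>0. \<forall>t>0. t < d \<longrightarrow> l < comparison_inner \<gamma> \<eta> a b t (\<alpha> * t)"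
    proof (intro exI[of _ "min r (r / \<alpha>)"] conjI allI impI)
      show "0 < min r (r / \<alpha>)" using r al by auto
      fix t :: real assume t: "0 < t" "t < min r (r / \<alpha>)"
      then have "\<alpha> * t < r" using al by (simp add: field_simps)
      then have "comparison_inner \<gamma> \<eta> a b r r \<le> comparison_inner \<gamma> \<eta> a b t (\<alpha> * t)"
        using comparison_inner_diag_le[OF c g h, of t r "\<alpha> * t"] t r al unfolding e_def by auto
      then show "l < comparison_inner \<gamma> \<eta> a b t (\<alpha> * t)" using r by simp
    qed
  next
    fix l assume "L < l"
    show "\<exists>d>0. \<forall>t>0. t < d \<longrightarrow> comparison_inner \<gamma> \<eta> a b t (\<alpha> * t) < l"
    proof (intro exI[of _ "min e (e / \<alpha>)"] conjI allI impI)
      show "0 < min e (e / \<alpha>)" using ep al by auto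
      fix t :: real assume t: "0 < t" "t < min e (e / \<alpha>)"
      then have at: "\<alpha> * t < e" using al by (simp add: field_simps)
      have "comparison_inner \<gamma> \<eta> a b t (\<alpha> * t) \<le> comparison_inner \<gamma> \<eta> a b (min t (\<alpha> * t)) (min t (\<alpha> * t))"
        using comparison_inner_le_diag[OF c g h, of t "\<alpha> * t"] t at al unfolding e_def by auto
      also have "\<dots> \<le> L"
        unfolding L_def e_def[symmetric] using t at al bdd by (intro cSUP_upper) auto
      finally show "comparison_inner \<gamma> \<eta> a b t (\<alpha> * t) < l" using \<open>L < l\<close> by simp
    qed
  qed
qed

lemma geodesic_germ_dist_ratio_tendsto:
  assumes c: "cat0 TYPE('y::metric_space)"
    and g: "geodesic_germ (y::'y) \<gamma> a e1" and h: "geodesic_germ y \<eta> b e2"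
  obtains L where "L \<le> a * b"
    and "\<And>\<alpha>. 0 \<le> \<alpha> \<Longrightarrow> ((\<lambda>t. dist (\<gamma> t) (\<eta> (\<alpha> * t)) / t)
            \<longlongrightarrow> sqrt (a\<^sup>2 + \<alpha>\<^sup>2 * b\<^sup>2 - 2 * \<alpha> * L)) (at_right 0)"
proof -
  define L where "L = (SUP r\<in>{0<..min e1 e2}. comparison_inner \<gamma> \<eta> a b r r)"
  have "L \<le> a * b" using comparison_inner_tendsto(2)[OF c g h, of 1] unfolding L_def by simp
  moreover have "((\<lambda>t. dist (\<gamma> t) (\<eta> (\<alpha> * t)) / t) \<longlongrightarrow> sqrt (a\<^sup>2 + \<alpha>\<^sup>2 * b\<^sup>2 - 2 * \<alpha> * L)) (at_right 0)"
    if al: "0 \<le> \<alpha>" for \<alpha>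
  proof (cases "\<alpha> = 0")
    case True
    have ev: "\<forall>\<^sub>F t in at_right 0. a = dist (\<gamma> t) (\<eta> (\<alpha> * t)) / t"
      unfolding eventually_at_right_field
    proof (intro exI[of _ e1] conjI allI impI)
      show "0 < e1" using geodesic_germ_pos[OF g] by simp
      fix t :: real assume t: "0 < t" "t < e1"
      then have "dist (\<gamma> t) (\<eta> (\<alpha> * t)) = a * t"
        using geodesic_germ_dist_0[OF g, of t] geodesic_germ_0[OF h] True by (simp add: dist_commute)
      then show "a = dist (\<gamma> t) (\<eta> (\<alpha> * t)) / t" using t by simp
    qed
    moreover have "sqrt (a\<^sup>2 + \<alpha>\<^sup>2 * b\<^sup>2 - 2 * \<alpha> * L) = a" using True geodesic_germ_pos[OF g] by simp
    ultimately show ?thesis using tendsto_cong[OF ev, THEN iffD1, OF tendsto_const] by simp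
  next
    case False
    then have ap: "0 < \<alpha>" using al by simp
    have ev: "\<forall>\<^sub>F t in at_right 0. sqrt (a\<^sup>2 + \<alpha>\<^sup>2 * b\<^sup>2 - 2 * \<alpha> * comparison_inner \<gamma> \<eta> a b t (\<alpha> * t))
                 = dist (\<gamma> t) (\<eta> (\<alpha> * t)) / t"
      unfolding eventually_at_right_field
    proof (intro exI[of _ 1] conjI allI impI)
      fix t :: real assume t: "0 < t" "t < 1"
      have "a\<^sup>2 + \<alpha>\<^sup>2 * b\<^sup>2 - 2 * \<alpha> * comparison_inner \<gamma> \<eta> a b t (\<alpha> * t) = (dist (\<gamma> t) (\<eta> (\<alpha> * t)) / t)\<^sup>2"
        by (rule dist_ratio_sq_comparison_inner[OF t(1) ap, symmetric])
      then show "sqrt (a\<^sup>2 + \<alpha>\<^sup>2 * b\<^sup>2 - 2 * \<alpha> * comparison_inner \<gamma> \<eta> a b t (\<alpha> * t))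
                 = dist (\<gamma> t) (\<eta> (\<alpha> * t)) / t"
        using t by simp
    qed simp
    moreover have "((\<lambda>t. sqrt (a\<^sup>2 + \<alpha>\<^sup>2 * b\<^sup>2 - 2 * \<alpha> * comparison_inner \<gamma> \<eta> a b t (\<alpha> * t)))
           \<longlongrightarrow> sqrt (a\<^sup>2 + \<alpha>\<^sup>2 * b\<^sup>2 - 2 * \<alpha> * L)) (at_right 0)"
      by (intro tendsto_intros comparison_inner_tendsto(1)[OF c g h ap, folded L_def])
    ultimately show ?thesis using tendsto_cong[OF ev] by blast
  qed
  ultimately show ?thesis by (rule that)
qed

lemma geodesic_germ_dist_ratio_mono:
  assumes c: "cat0 TYPE('y::metric_space)"
    and g: "geodesic_germ (y::'y) \<gamma> a e1" and h: "geodesic_germ y \<eta> b e2"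
    and s: "0 < s" "s \<le> t" "t \<le> e1" "t \<le> e2"
  shows "dist (\<gamma> s) (\<eta> s) / s \<le> dist (\<gamma> t) (\<eta> t) / t"
proof -
  have eq: "(dist (\<gamma> r) (\<eta> r) / r)\<^sup>2 = a\<^sup>2 + b\<^sup>2 - 2 * comparison_inner \<gamma> \<eta> a b r r" if "0 < r" for r
    using dist_ratio_sq_comparison_inner[OF that, of 1] by simp
  have "comparison_inner \<gamma> \<eta> a b t t \<le> comparison_inner \<gamma> \<eta> a b s s"
    using comparison_inner_diag_le[OF c g h, of s t s] s by linarith
  then have "(dist (\<gamma> s) (\<eta> s) / s)\<^sup>2 \<le> (dist (\<gamma> t) (\<eta> t) / t)\<^sup>2" using eq s by simp
  moreover have "0 \<le> dist (\<gamma> t) (\<eta> t) / t" using s by simp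
  ultimately show ?thesis by (rule power2_le_imp_le)
qed

section \<open>The tangent cone\<close>

lemma dgerm_tendsto:
  assumes c: "cat0 TYPE('y::metric_space)" and g: "geod_from (y::'y) \<gamma>" and h: "geod_from y \<eta>"
  shows "((\<lambda>t. dist (\<gamma> t) (\<eta> t) / t) \<longlongrightarrow> dgerm \<gamma> \<eta>) (at_right 0)"
proof -
  obtain a e1 b e2 where "geodesic_germ y \<gamma> a e1" "geodesic_germ y \<eta> b e2"
    using g h by (meson geod_from_geodesic_germE)
  then obtain L where "\<And>\<alpha>. 0 \<le> \<alpha> \<Longrightarrow> ((\<lambda>t. dist (\<gamma> t) (\<eta> (\<alpha> * t)) / t)
      \<longlongrightarrow> sqrt (a\<^sup>2 + \<alpha>\<^sup>2 * b\<^sup>2 - 2 * \<alpha> * L)) (at_right 0)"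
    using geodesic_germ_dist_ratio_tendsto[OF c] by blast
  from this[of 1] show ?thesis unfolding dgerm_def by (simp add: tendsto_Lim)
qed

lemma dgerm_cosine_law:
  assumes c: "cat0 TYPE('y::metric_space)"
    and g: "geodesic_germ (y::'y) \<gamma> a e1" and h: "geodesic_germ y \<eta> b e2" and al: "0 \<le> \<alpha>"
  shows "(dgerm \<gamma> (\<lambda>t. \<eta> (\<alpha> * t)))\<^sup>2 = a\<^sup>2 + \<alpha>\<^sup>2 * b\<^sup>2 - \<alpha> * (a\<^sup>2 + b\<^sup>2 - (dgerm \<gamma> \<eta>)\<^sup>2)"
proof -
  obtain L where Lb: "L \<le> a * b" and T: "\<And>\<beta>. 0 \<le> \<beta> \<Longrightarrow> ((\<lambda>t. dist (\<gamma> t) (\<eta> (\<beta> * t)) / t)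
            \<longlongrightarrow> sqrt (a\<^sup>2 + \<beta>\<^sup>2 * b\<^sup>2 - 2 * \<beta> * L)) (at_right 0)"
    using geodesic_germ_dist_ratio_tendsto[OF c g h] by blast
  have sq: "(dgerm \<gamma> (\<lambda>t. \<eta> (\<beta> * t)))\<^sup>2 = a\<^sup>2 + \<beta>\<^sup>2 * b\<^sup>2 - 2 * \<beta> * L" if "0 \<le> \<beta>" for \<beta>
  proof -
    have "2 * \<beta> * L \<le> 2 * \<beta> * (a * b)" using that Lb by (simp add: mult_left_mono)
    moreover have "0 \<le> (a - \<beta> * b)\<^sup>2" by simp
    ultimately have "0 \<le> a\<^sup>2 + \<beta>\<^sup>2 * b\<^sup>2 - 2 * \<beta> * L" by (simp add: algebra_simps power2_eq_square)
    moreover have "dgerm \<gamma> (\<lambda>t. \<eta> (\<beta> * t)) = sqrt (a\<^sup>2 + \<beta>\<^sup>2 * b\<^sup>2 - 2 * \<beta> * L)"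
      using T[OF that] unfolding dgerm_def by (simp add: tendsto_Lim)
    ultimately show ?thesis by simp
  qed
  have "a\<^sup>2 + b\<^sup>2 - (dgerm \<gamma> \<eta>)\<^sup>2 = 2 * L" using sq[of 1] by simp
  then show ?thesis unfolding sq[OF al] by (simp only:)
qed

lemma dgerm_const:
  assumes g: "geodesic_germ y \<gamma> a e"
  shows "dgerm \<gamma> (\<lambda>t. y) = a"
proof -
  have ev: "\<forall>\<^sub>F t in at_right 0. a = dist (\<gamma> t) y / t"
    unfolding eventually_at_right_field
  proof (intro exI[of _ e] conjI allI impI)
    show "0 < e" using geodesic_germ_pos[OF g] by simp
    fix t :: real assume t: "0 < t" "t < e"
    then have "dist (\<gamma> t) y = a * t" using geodesic_germ_dist_0[OF g, of t] by (simp add: dist_commute)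
    then show "a = dist (\<gamma> t) y / t" using t by simp
  qed
  show ?thesis
    unfolding dgerm_def using tendsto_cong[OF ev, THEN iffD1, OF tendsto_const]
    by (simp add: tendsto_Lim)
qed

lemma dgerm_eq_0_if_eventually_eq:
  assumes "\<forall>\<^sub>F t in at_right 0. \<gamma> t = \<eta> t"
  shows "dgerm \<gamma> \<eta> = 0"
proof -
  have "\<forall>\<^sub>F t in at_right 0. 0 = dist (\<gamma> t) (\<eta> t) / t"
    using assms by (rule eventually_mono) simp
  then have "((\<lambda>t. dist (\<gamma> t) (\<eta> t) / t) \<longlongrightarrow> 0) (at_right 0)"
    by (rule tendsto_cong[THEN iffD1, OF _ tendsto_const])
  then show ?thesis unfolding dgerm_def by (simp add: tendsto_Lim)
qed

lemma dgerm_self: "dgerm \<gamma> \<gamma> = 0"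
  by (rule dgerm_eq_0_if_eventually_eq) simp

lemma dgerm_sym: "dgerm \<gamma> \<eta> = dgerm \<eta> \<gamma>"
  unfolding dgerm_def by (simp add: dist_commute)

lemma dgerm_nonneg:
  assumes "cat0 TYPE('y::metric_space)" "geod_from (y::'y) \<gamma>" "geod_from y \<eta>"
  shows "0 \<le> dgerm \<gamma> \<eta>"
proof (rule tendsto_lowerbound[OF dgerm_tendsto[OF assms]])
  show "\<forall>\<^sub>F t in at_right 0. 0 \<le> dist (\<gamma> t) (\<eta> t) / t"
    unfolding eventually_at_right_field by (intro exI[of _ 1]) auto
qed simp

lemma dgerm_triangle:
  assumes c: "cat0 TYPE('y::metric_space)"
    and g: "geod_from (y::'y) \<gamma>" and h: "geod_from y \<eta>" and k: "geod_from y \<zeta>"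
  shows "dgerm \<gamma> \<zeta> \<le> dgerm \<gamma> \<eta> + dgerm \<eta> \<zeta>"
proof (rule tendsto_le[OF trivial_limit_at_right_real _ dgerm_tendsto[OF c g k]])
  show "((\<lambda>t. dist (\<gamma> t) (\<eta> t) / t + dist (\<eta> t) (\<zeta> t) / t) \<longlongrightarrow> dgerm \<gamma> \<eta> + dgerm \<eta> \<zeta>) (at_right 0)"
    by (intro tendsto_add dgerm_tendsto[OF c g h] dgerm_tendsto[OF c h k])
  show "\<forall>\<^sub>F t in at_right 0. dist (\<gamma> t) (\<zeta> t) / t \<le> dist (\<gamma> t) (\<eta> t) / t + dist (\<eta> t) (\<zeta> t) / t"
    unfolding eventually_at_right_field
  proof (intro exI[of _ 1] conjI allI impI)
    fix t :: real assume "0 < t"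
    then show "dist (\<gamma> t) (\<zeta> t) / t \<le> dist (\<gamma> t) (\<eta> t) / t + dist (\<eta> t) (\<zeta> t) / t"
      using dist_triangle[of "\<gamma> t" "\<zeta> t" "\<eta> t"]
      by (simp add: add_divide_distrib[symmetric] divide_right_mono)
  qed simp
qed

lemma dgerm_le:
  assumes c: "cat0 TYPE('y::metric_space)" and g: "geod_from (y::'y) \<gamma>" and h: "geod_from y \<eta>"
    and "0 < h" and "\<And>t. 0 < t \<Longrightarrow> t \<le> h \<Longrightarrow> dist (\<gamma> t) (\<eta> t) / t \<le> B"
  shows "dgerm \<gamma> \<eta> \<le> B"
proof (rule tendsto_upperbound[OF dgerm_tendsto[OF c g h]])
  show "\<forall>\<^sub>F t in at_right 0. dist (\<gamma> t) (\<eta> t) / t \<le> B"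
    unfolding eventually_at_right_field using assms(4,5) by (intro exI[of _ h]) auto
qed simp

lemma tcone_geod_from: "v \<in> tcone y \<Longrightarrow> geod_from y (v n)"
  unfolding tcone_def by blast

lemma tcone_Cauchy: "v \<in> tcone y \<Longrightarrow> 0 < e \<Longrightarrow> \<exists>N. \<forall>m\<ge>N. \<forall>n\<ge>N. dgerm (v m) (v n) < e"
  unfolding tcone_def by blast

lemma tv_of_tcone: "geod_from y \<gamma> \<Longrightarrow> tv_of \<gamma> \<in> tcone y"
  unfolding tcone_def tv_of_def by (auto simp: dgerm_self)

lemma tdist_tendsto:
  assumes c: "cat0 TYPE('y::metric_space)" and v: "v \<in> tcone (y::'y)" and w: "w \<in> tcone y"
  shows "(\<lambda>n. dgerm (v n) (w n)) \<longlonglongrightarrow> tdist y v w"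
proof -
  have gv: "\<And>k. geod_from y (v k)" and gw: "\<And>k. geod_from y (w k)"
    using v w by (auto intro: tcone_geod_from)
  have "Cauchy (\<lambda>n. dgerm (v n) (w n))"
  proof (rule metric_CauchyI)
    fix \<epsilon> :: real assume "0 < \<epsilon>"
    then obtain N1 N2 where N1: "\<forall>m\<ge>N1. \<forall>n\<ge>N1. dgerm (v m) (v n) < \<epsilon> / 2"
      and N2: "\<forall>m\<ge>N2. \<forall>n\<ge>N2. dgerm (w m) (w n) < \<epsilon> / 2"
      using tcone_Cauchy[OF v, of "\<epsilon> / 2"] tcone_Cauchy[OF w, of "\<epsilon> / 2"] by auto
    show "\<exists>M. \<forall>m\<ge>M. \<forall>n\<ge>M. dist (dgerm (v m) (w m)) (dgerm (v n) (w n)) < \<epsilon>"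
    proof (intro exI[of _ "max N1 N2"] allI impI)
      fix m n assume "max N1 N2 \<le> m" "max N1 N2 \<le> n"
      then have "dgerm (v m) (v n) < \<epsilon> / 2" "dgerm (w m) (w n) < \<epsilon> / 2" using N1 N2 by auto
      moreover have "dgerm (v m) (w m) \<le> dgerm (v m) (v n) + dgerm (v n) (w m)"
        "dgerm (v n) (w m) \<le> dgerm (v n) (w n) + dgerm (w n) (w m)"
        "dgerm (v n) (w n) \<le> dgerm (v n) (v m) + dgerm (v m) (w n)"
        "dgerm (v m) (w n) \<le> dgerm (v m) (w m) + dgerm (w m) (w n)"
        using dgerm_triangle[OF c gv gv gw] dgerm_triangle[OF c gv gw gw] by blast+
      ultimately show "dist (dgerm (v m) (w m)) (dgerm (v n) (w n)) < \<epsilon>"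
        unfolding dist_real_def using dgerm_sym[of "v n" "v m"] dgerm_sym[of "w n" "w m"] by linarith
    qed
  qed
  then show ?thesis unfolding tdist_def by (simp add: Cauchy_convergent_iff convergent_LIMSEQ_iff)
qed

lemma tdist_sym: "tdist y v w = tdist y w v"
  unfolding tdist_def by (simp add: dgerm_sym)

lemma tdist_nonneg:
  assumes c: "cat0 TYPE('y::metric_space)" and v: "v \<in> tcone (y::'y)" and w: "w \<in> tcone y"
  shows "0 \<le> tdist y v w"
  using tdist_tendsto[OF c v w]
  by (rule LIMSEQ_le_const) (use dgerm_nonneg[OF c tcone_geod_from[OF v] tcone_geod_from[OF w]] in auto)

lemma tdist_triangle:
  assumes c: "cat0 TYPE('y::metric_space)"
    and u: "u \<in> tcone (y::'y)" and v: "v \<in> tcone y" and w: "w \<in> tcone y"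
  shows "tdist y u w \<le> tdist y u v + tdist y v w"
proof (rule LIMSEQ_le[OF tdist_tendsto[OF c u w]])
  show "(\<lambda>n. dgerm (u n) (v n) + dgerm (v n) (w n)) \<longlonglongrightarrow> tdist y u v + tdist y v w"
    by (intro tendsto_add tdist_tendsto[OF c u v] tdist_tendsto[OF c v w])
  show "\<exists>N. \<forall>n\<ge>N. dgerm (u n) (w n) \<le> dgerm (u n) (v n) + dgerm (v n) (w n)"
    using dgerm_triangle[OF c tcone_geod_from[OF u] tcone_geod_from[OF v] tcone_geod_from[OF w]] by blast
qed

lemma tdist_tv_of: "tdist y (tv_of \<gamma>) (tv_of \<eta>) = dgerm \<gamma> \<eta>"
  unfolding tdist_def tv_of_def by (rule limI) simp

lemma tzero_tcone: "tzero y \<in> tcone y"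
  unfolding tzero_def by (rule tv_of_tcone[OF geodesic_germ_imp_geod_from[OF geodesic_germ_const]])

lemma tnorm_nonneg: "cat0 TYPE('y::metric_space) \<Longrightarrow> v \<in> tcone (y::'y) \<Longrightarrow> 0 \<le> tnorm y v"
  unfolding tnorm_def by (rule tdist_nonneg[OF _ _ tzero_tcone])

lemma tnorm_tendsto:
  assumes "cat0 TYPE('y::metric_space)" "v \<in> tcone (y::'y)"
  shows "(\<lambda>n. dgerm (v n) (\<lambda>t. y)) \<longlonglongrightarrow> tnorm y v"
  using tdist_tendsto[OF assms tzero_tcone] unfolding tnorm_def by (simp add: tzero_def tv_of_def)

lemma tdir_geodesic_germ:
  assumes "cat0 TYPE('y::metric_space)" "0 \<le> \<alpha>"
  shows "geodesic_germ (y::'y) (\<lambda>t. geod y z (\<alpha> * t)) (\<alpha> * dist y z) (1 / (\<alpha> + 1))"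
  using geodesic_germ_scale[OF geodesic_germ_geod[OF assms(1)] assms(2)] by simp

lemma tdir_tcone:
  assumes "cat0 TYPE('y::metric_space)" "0 \<le> \<alpha>"
  shows "tdir \<alpha> (y::'y) z \<in> tcone y"
  unfolding tdir_def by (rule tv_of_tcone[OF geodesic_germ_imp_geod_from[OF tdir_geodesic_germ[OF assms]]])

lemma tnorm_tdir:
  assumes "cat0 TYPE('y::metric_space)" "0 \<le> \<alpha>"
  shows "tnorm (y::'y) (tdir \<alpha> y z) = \<alpha> * dist y z"
  unfolding tnorm_def tdir_def tzero_def tdist_tv_of
  using dgerm_const[OF tdir_geodesic_germ[OF assms]] .

lemma tdir_0:
  assumes "cat0 TYPE('y::metric_space)"
  shows "tdir 0 (y::'y) z = tzero y"
  unfolding tdir_def tzero_def using geod_spec(2)[OF assms] by simp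

lemma tdir_self:
  assumes "cat0 TYPE('y::metric_space)"
  shows "tdir \<alpha> (y::'y) y = tzero y"
  unfolding tdir_def tzero_def using geod_self[OF assms] by simp

lemma tinner_tdir1:
  assumes "cat0 TYPE('y::metric_space)"
  shows "tinner (y::'y) v (tdir 1 y z) = ((tnorm y v)\<^sup>2 + (dist y z)\<^sup>2 - (tdist y v (tdir 1 y z))\<^sup>2) / 2"
  unfolding tinner_def using tnorm_tdir[OF assms, of 1 y z] by simp

lemma tdist_tdir_cosine_law:
  assumes c: "cat0 TYPE('y::metric_space)" and v: "v \<in> tcone (y::'y)" and al: "0 \<le> \<alpha>"
  shows "(tdist y v (tdir \<alpha> y z))\<^sup>2 = (tnorm y v)\<^sup>2 + \<alpha>\<^sup>2 * (dist y z)\<^sup>2 - 2 * \<alpha> * tinner y v (tdir 1 y z)"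
proof -
  have eq: "(dgerm (v n) (\<lambda>t. geod y z (\<alpha> * t)))\<^sup>2 = (dgerm (v n) (\<lambda>t. y))\<^sup>2 + \<alpha>\<^sup>2 * (dist y z)\<^sup>2
      - \<alpha> * ((dgerm (v n) (\<lambda>t. y))\<^sup>2 + (dist y z)\<^sup>2 - (dgerm (v n) (geod y z))\<^sup>2)" for n
  proof -
    obtain a e where g: "geodesic_germ y (v n) a e"
      using tcone_geod_from[OF v] by (rule geod_from_geodesic_germE)
    show ?thesis using dgerm_cosine_law[OF c g geodesic_germ_geod[OF c] al, of z] dgerm_const[OF g] by simp
  qed
  have l\<alpha>: "(\<lambda>n. dgerm (v n) (\<lambda>t. geod y z (\<alpha> * t))) \<longlonglongrightarrow> tdist y v (tdir \<alpha> y z)"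
    using tdist_tendsto[OF c v tdir_tcone[OF c al]] unfolding tdir_def tv_of_def by simp
  have l1: "(\<lambda>n. dgerm (v n) (geod y z)) \<longlonglongrightarrow> tdist y v (tdir 1 y z)"
    using tdist_tendsto[OF c v tdir_tcone[OF c, of 1]] unfolding tdir_def tv_of_def by simp
  have "(\<lambda>n. (dgerm (v n) (\<lambda>t. geod y z (\<alpha> * t)))\<^sup>2) \<longlonglongrightarrow> (tnorm y v)\<^sup>2 + \<alpha>\<^sup>2 * (dist y z)\<^sup>2
      - \<alpha> * ((tnorm y v)\<^sup>2 + (dist y z)\<^sup>2 - (tdist y v (tdir 1 y z))\<^sup>2)"
    unfolding eq by (intro tendsto_intros l1 tnorm_tendsto[OF c v])
  moreover have "(\<lambda>n. (dgerm (v n) (\<lambda>t. geod y z (\<alpha> * t)))\<^sup>2) \<longlonglongrightarrow> (tdist y v (tdir \<alpha> y z))\<^sup>2"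
    by (intro tendsto_intros l\<alpha>)
  ultimately show ?thesis unfolding tinner_tdir1[OF c] using LIMSEQ_unique by fastforce
qed

lemma tdir_busemann:
  assumes c: "cat0 TYPE('y::metric_space)" and al: "0 \<le> \<alpha>"
  shows "tdist (y::'y) (tdir \<alpha> y w) (tdir \<alpha> y z) \<le> \<alpha> * dist w z"
proof (cases "\<alpha> = 0")
  case True
  then show ?thesis unfolding tdir_def tdist_tv_of using geod_spec(2)[OF c] by (simp add: dgerm_self)
next
  case False
  then have ap: "0 < \<alpha>" using al by simp
  have gw: "geodesic_germ y (geod y w) (dist y w) 1" and gz: "geodesic_germ y (geod y z) (dist y z) 1"
    using geodesic_germ_geod[OF c] by auto
  show ?thesis unfolding tdir_def tdist_tv_of
  proof (rule dgerm_le[OF c])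
    show "geod_from y (\<lambda>t. geod y w (\<alpha> * t))" "geod_from y (\<lambda>t. geod y z (\<alpha> * t))"
      using geodesic_germ_imp_geod_from[OF tdir_geodesic_germ[OF c al]] by blast+
    show "0 < 1 / \<alpha>" using ap by simp
    fix t :: real assume t: "0 < t" "t \<le> 1 / \<alpha>"
    have at: "0 < \<alpha> * t" "\<alpha> * t \<le> 1" using t ap by (auto simp: field_simps)
    have "dist (geod y w (\<alpha> * t)) (geod y z (\<alpha> * t)) / (\<alpha> * t) \<le> dist (geod y w 1) (geod y z 1) / 1"
      using geodesic_germ_dist_ratio_mono[OF c gw gz at] by simp
    also have "\<dots> = dist w z" using geod_spec(3)[OF c] by simp
    finally show "dist (geod y w (\<alpha> * t)) (geod y z (\<alpha> * t)) / t \<le> \<alpha> * dist w z"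
      using ap t by (simp add: field_simps)
  qed
qed

lemma tdist_tdir1_lipschitz:
  assumes c: "cat0 TYPE('y::metric_space)" and v: "v \<in> tcone (y::'y)"
  shows "\<bar>tdist y v (tdir 1 y z) - tdist y v (tdir 1 y w)\<bar> \<le> dist z w"
proof -
  have m: "tdir 1 y z \<in> tcone y" "tdir 1 y w \<in> tcone y" using tdir_tcone[OF c] by auto
  show ?thesis
    using tdist_triangle[OF c v m(2) m(1)] tdist_triangle[OF c v m(1) m(2)]
      tdir_busemann[OF c, of 1 y w z] tdir_busemann[OF c, of 1 y z w]
    by (simp add: dist_commute abs_le_iff)
qed

lemma tinner_tdir1_continuous:
  assumes c: "cat0 TYPE('y::metric_space)" and v: "v \<in> tcone (y::'y)" and z: "zs \<longlonglongrightarrow> z"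
  shows "(\<lambda>k. tinner y v (tdir 1 y (zs k))) \<longlonglongrightarrow> tinner y v (tdir 1 y z)"
proof -
  have "(\<lambda>k. tdist y v (tdir 1 y (zs k)) - tdist y v (tdir 1 y z)) \<longlonglongrightarrow> 0"
  proof (rule Lim_null_comparison[OF _ tendsto_dist_iff[THEN iffD1, OF z]])
    show "\<forall>\<^sub>F k in sequentially. norm (tdist y v (tdir 1 y (zs k)) - tdist y v (tdir 1 y z)) \<le> dist (zs k) z"
      using tdist_tdir1_lipschitz[OF c v] by (intro always_eventually allI) simp
  qed
  then have "(\<lambda>k. tdist y v (tdir 1 y (zs k))) \<longlonglongrightarrow> tdist y v (tdir 1 y z)"
    by (rule LIM_zero_cancel)
  moreover have "(\<lambda>k. dist y (zs k)) \<longlonglongrightarrow> dist y z" by (intro tendsto_intros z)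
  ultimately show ?thesis unfolding tinner_tdir1[OF c]
    by (intro tendsto_divide tendsto_diff tendsto_add tendsto_power tendsto_const) simp_all
qed

lemma tcone_approx_tv_of:
  assumes c: "cat0 TYPE('y::metric_space)" and v: "v \<in> tcone (y::'y)" and "0 < \<epsilon>"
  obtains j where "tdist y v (tv_of (v j)) < \<epsilon>"
proof -
  obtain N where N: "\<forall>m\<ge>N. \<forall>n\<ge>N. dgerm (v m) (v n) < \<epsilon> / 2"
    using tcone_Cauchy[OF v, of "\<epsilon> / 2"] \<open>0 < \<epsilon>\<close> by auto
  have "(\<lambda>n. dgerm (v n) (v N)) \<longlonglongrightarrow> tdist y v (tv_of (v N))"
    using tdist_tendsto[OF c v tv_of_tcone[OF tcone_geod_from[OF v]]] unfolding tv_of_def by simp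
  then have "tdist y v (tv_of (v N)) \<le> \<epsilon> / 2"
    by (rule LIMSEQ_le_const2) (use N in \<open>auto intro: less_imp_le\<close>)
  then have "tdist y v (tv_of (v N)) < \<epsilon>" using \<open>0 < \<epsilon>\<close> by linarith
  then show ?thesis by (rule that)
qed

lemma geod_geodesic_germ_rescale:
  assumes c: "cat0 TYPE('y::metric_space)" and g: "geodesic_germ (y::'y) \<gamma> a e"
    and h: "0 < h" "h \<le> e" and t: "t \<in> {0..h}"
  shows "geod y (\<gamma> h) (t / h) = \<gamma> t"
proof -
  have "t / h \<in> {0..1}" using t h by auto
  then have "geod y (\<gamma> h) (t / h) = \<gamma> (h * (t / h))"
    using geod_unique[OF c geodesic_germ_rescale[OF g h]] geodesic_germ_0[OF g] by simp
  then show ?thesis using h by simp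
qed

lemma tdist_tv_of_tdir_eq_0:
  assumes c: "cat0 TYPE('y::metric_space)" and g: "geodesic_germ (y::'y) \<gamma> a e"
    and \<alpha>: "0 < \<alpha>" "1 / \<alpha> \<le> e"
  shows "tdist y (tv_of \<gamma>) (tdir \<alpha> y (\<gamma> (1 / \<alpha>))) = 0"
  unfolding tdir_def tdist_tv_of
proof (rule dgerm_eq_0_if_eventually_eq)
  have h: "0 < 1 / \<alpha>" using \<alpha> by simp
  show "\<forall>\<^sub>F t in at_right 0. \<gamma> t = geod y (\<gamma> (1 / \<alpha>)) (\<alpha> * t)"
    unfolding eventually_at_right_field
  proof (intro exI[of _ "1 / \<alpha>"] conjI allI impI)
    fix t :: real assume "0 < t" "t < 1 / \<alpha>"
    then show "\<gamma> t = geod y (\<gamma> (1 / \<alpha>)) (\<alpha> * t)"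
      using geod_geodesic_germ_rescale[OF c g h \<alpha>(2), of t] by (simp add: mult.commute)
  qed (rule h)
qed

text \<open>Every geodesic germ from \<open>y\<close> is, near \<open>0\<close>, the geodesic towards one of its own points,
  reparametrised by a large factor \<open>n\<close>; hence the directions \<open>n (G_y^z)'_0\<close> with \<open>z\<close> in a dense set
  are dense in \<open>T_y Y\<close>, and uniformly so for all large \<open>n\<close>.\<close>
lemma tdir_dense_in_tcone:
  assumes c: "cat0 TYPE('y::metric_space)" and v: "v \<in> tcone (y::'y)"
    and dense: "\<And>x \<epsilon>. 0 < \<epsilon> \<Longrightarrow> \<exists>k. dist (zs k) x < \<epsilon>" and ep: "0 < \<epsilon>"
  obtains N where "\<And>n. n \<ge> N \<Longrightarrow> \<exists>k. tdist y v (tdir (real n) y (zs k)) < \<epsilon>"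
proof -
  obtain j where j: "tdist y v (tv_of (v j)) < \<epsilon> / 2"
    using tcone_approx_tv_of[OF c v, of "\<epsilon> / 2"] ep by auto
  obtain a e where g: "geodesic_germ y (v j) a e"
    using tcone_geod_from[OF v] by (rule geod_from_geodesic_germE)
  have ep0: "0 < e" using geodesic_germ_pos[OF g] by simp
  obtain N :: nat where N: "1 / e < N" using reals_Archimedean2 by blast
  show ?thesis
  proof (rule that)
    fix n assume "N \<le> n"
    then have ne: "1 / e < real n" using N by linarith
    then have np: "0 < real n" using ep0 by (smt (verit) divide_pos_pos)
    have "1 / real n \<le> e" using ne ep0 np by (simp add: field_simps)
    define w where "w = v j (1 / real n)"
    have w: "tdist y (tv_of (v j)) (tdir (real n) y w) = 0"
      unfolding w_def by (rule tdist_tv_of_tdir_eq_0[OF c g np \<open>1 / real n \<le> e\<close>])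
    obtain k where k: "dist (zs k) w < \<epsilon> / (2 * real n)"
      using dense[of "\<epsilon> / (2 * real n)"] ep np by auto
    have "tdist y (tdir (real n) y w) (tdir (real n) y (zs k)) \<le> real n * dist w (zs k)"
      using tdir_busemann[OF c, of "real n"] by simp
    also have "\<dots> < \<epsilon> / 2"
      using mult_strict_left_mono[OF k np] np by (simp add: dist_commute)
    finally have wk: "tdist y (tdir (real n) y w) (tdir (real n) y (zs k)) < \<epsilon> / 2" .
    have m: "tv_of (v j) \<in> tcone y" "tdir (real n) y w \<in> tcone y" "tdir (real n) y (zs k) \<in> tcone y"
      using tv_of_tcone[OF tcone_geod_from[OF v]] tdir_tcone[OF c] by auto
    have "tdist y v (tdir (real n) y (zs k)) < \<epsilon>"
      using j w wk tdist_triangle[OF c v m(1) m(3)] tdist_triangle[OF c m] by linarith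
    then show "\<exists>k. tdist y v (tdir (real n) y (zs k)) < \<epsilon>" by blast
  qed
qed

lemma tnorm_diff_le_tdist:
  assumes c: "cat0 TYPE('y::metric_space)" and v: "v \<in> tcone (y::'y)" and w: "w \<in> tcone y"
  shows "\<bar>tnorm y v - tnorm y w\<bar> \<le> tdist y v w"
  using tdist_triangle[OF c v w tzero_tcone] tdist_triangle[OF c w v tzero_tcone]
  unfolding tnorm_def by (simp add: tdist_sym abs_le_iff)

lemma bdd_below_range_tdist:
  assumes "cat0 TYPE('y::metric_space)" "v \<in> tcone (y::'y)" "\<And>k. w k \<in> tcone y"
  shows "bdd_below (range (\<lambda>k. tdist y v (w k)))"
  using tdist_nonneg[OF assms(1,2) assms(3)] by (intro bdd_belowI2[of _ 0])

lemma tendsto_tnorm: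
  assumes c: "cat0 TYPE('y::metric_space)" and w: "\<And>n. w n \<in> tcone (y::'y)" and v: "v \<in> tcone y"
    and lim: "(\<lambda>n. tdist y (w n) v) \<longlonglongrightarrow> 0"
  shows "(\<lambda>n. tnorm y (w n)) \<longlonglongrightarrow> tnorm y v"
proof -
  have "(\<lambda>n. tnorm y (w n) - tnorm y v) \<longlonglongrightarrow> 0"
    by (rule Lim_null_comparison[OF _ lim])
      (use tnorm_diff_le_tdist[OF c w v] in \<open>intro always_eventually allI, simp\<close>)
  then show ?thesis by (rule LIM_zero_cancel)
qed

section \<open>Approximation by directions towards a dense set\<close>

lemma tnorm_sq_eq_SUP_tdir:
  assumes c: "cat0 TYPE('y::metric_space)" and v: "v \<in> tcone (y::'y)"
    and dense: "\<And>x \<epsilon>. 0 < \<epsilon> \<Longrightarrow> \<exists>k. dist (zs k) x < \<epsilon>"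
  defines "\<phi> \<equiv> \<lambda>(n, k). 2 * real n * tinner y v (tdir 1 y (zs k)) - (real n)\<^sup>2 * (dist y (zs k))\<^sup>2"
  shows "bdd_above (range \<phi>)" and "(tnorm y v)\<^sup>2 = (SUP p. \<phi> p)"
proof -
  have \<phi>_eq: "\<phi> (n, k) = (tnorm y v)\<^sup>2 - (tdist y v (tdir (real n) y (zs k)))\<^sup>2" for n k
    using tdist_tdir_cosine_law[OF c v, of "real n" "zs k"] unfolding \<phi>_def by simp
  then have \<phi>_le: "\<phi> p \<le> (tnorm y v)\<^sup>2" for p by (cases p) simp
  then show bdd: "bdd_above (range \<phi>)" by (intro bdd_aboveI2)
  show "(tnorm y v)\<^sup>2 = (SUP p. \<phi> p)"
  proof (rule antisym)
    show "(tnorm y v)\<^sup>2 \<le> (SUP p. \<phi> p)"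
    proof (rule field_le_epsilon)
      fix e :: real assume e: "0 < e"
      obtain N where "\<And>n. n \<ge> N \<Longrightarrow> \<exists>k. tdist y v (tdir (real n) y (zs k)) < sqrt e"
        using tdir_dense_in_tcone[OF c v dense, of "sqrt e"] e by auto
      then obtain k where k: "tdist y v (tdir (real N) y (zs k)) < sqrt e" by blast
      have "0 \<le> tdist y v (tdir (real N) y (zs k))"
        by (rule tdist_nonneg[OF c v tdir_tcone[OF c]]) simp
      then have "(tdist y v (tdir (real N) y (zs k)))\<^sup>2 < e"
        using power_strict_mono[OF k, of 2] e by simp
      then have "(tnorm y v)\<^sup>2 \<le> \<phi> (N, k) + e" using \<phi>_eq[of N k] by simp
      also have "\<phi> (N, k) \<le> (SUP p. \<phi> p)" by (rule cSUP_upper[OF _ bdd]) simp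
      finally show "(tnorm y v)\<^sup>2 \<le> (SUP p. \<phi> p) + e" by simp
    qed
  qed (rule cSUP_least, simp_all add: \<phi>_le)
qed

lemma INF_tdist_tdir_le_tnorm:
  assumes c: "cat0 TYPE('y::metric_space)" and v: "v \<in> tcone (y::'y)"
    and dense: "\<And>x \<epsilon>. 0 < \<epsilon> \<Longrightarrow> \<exists>k. dist (zs k) x < \<epsilon>"
  shows "(INF k. tdist y v (tdir (real n) y (zs k))) \<le> tnorm y v"
proof (rule field_le_epsilon)
  fix e :: real assume "0 < e"
  then obtain k where k: "dist (zs k) y < e / real (Suc n)" using dense[of "e / real (Suc n)"] by auto
  have "real n * dist y (zs k) \<le> real (Suc n) * dist y (zs k)" by (intro mult_right_mono) auto
  also have "\<dots> \<le> e" using k by (simp add: dist_commute field_simps)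
  finally have nk: "real n * dist y (zs k) \<le> e" .
  have "(INF k. tdist y v (tdir (real n) y (zs k))) \<le> tdist y v (tdir (real n) y (zs k))"
    by (rule cINF_lower[OF bdd_below_range_tdist[OF c v tdir_tcone[OF c]]]) simp_all
  also have "\<dots> \<le> tnorm y v + tdist y (tzero y) (tdir (real n) y (zs k))"
    using tdist_triangle[OF c v tzero_tcone tdir_tcone[OF c]] unfolding tnorm_def by simp
  also have "tdist y (tzero y) (tdir (real n) y (zs k)) = real n * dist y (zs k)"
    using tnorm_tdir[OF c, of "real n" y "zs k"] unfolding tnorm_def by (simp add: tdist_sym)
  finally show "(INF k. tdist y v (tdir (real n) y (zs k))) \<le> tnorm y v + e" using nk by linarith
qed

lemma INF_tdist_tdir_tendsto_0:
  assumes c: "cat0 TYPE('y::metric_space)" and v: "v \<in> tcone (y::'y)"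
    and dense: "\<And>x \<epsilon>. 0 < \<epsilon> \<Longrightarrow> \<exists>k. dist (zs k) x < \<epsilon>"
  shows "(\<lambda>n. INF k. tdist y v (tdir (real n) y (zs k))) \<longlonglongrightarrow> 0"
proof (rule LIMSEQ_I)
  have nonneg: "0 \<le> tdist y v (tdir (real n) y (zs k))" for n k
    by (rule tdist_nonneg[OF c v tdir_tcone[OF c]]) simp
  fix r :: real assume "0 < r"
  then obtain N where N: "\<And>n. n \<ge> N \<Longrightarrow> \<exists>k. tdist y v (tdir (real n) y (zs k)) < r"
    using tdir_dense_in_tcone[OF c v dense] by blast
  show "\<exists>no. \<forall>n\<ge>no. norm ((INF k. tdist y v (tdir (real n) y (zs k))) - 0) < r"
  proof (intro exI[of _ N] allI impI)
    fix n assume "N \<le> n"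
    then obtain k where "tdist y v (tdir (real n) y (zs k)) < r" using N by blast
    moreover have "(INF k. tdist y v (tdir (real n) y (zs k))) \<le> tdist y v (tdir (real n) y (zs k))"
      by (rule cINF_lower[OF bdd_below_range_tdist[OF c v tdir_tcone[OF c]]]) simp_all
    moreover have "0 \<le> (INF k. tdist y v (tdir (real n) y (zs k)))"
      by (rule cINF_greatest) (auto simp: nonneg)
    ultimately show "norm ((INF k. tdist y v (tdir (real n) y (zs k))) - 0) < r" by simp
  qed
qed

text \<open>The slack \<open>tnorm y v / Suc n\<close> (rather than \<open>1 / Suc n\<close>) keeps the approximants bounded by
  a multiple of \<open>tnorm y v\<close>, which is what makes them square integrable.\<close>
lemma near_best_tdir_approx:
  assumes c: "cat0 TYPE('y::metric_space)" and v: "v \<in> tcone (y::'y)"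
    and dense: "\<And>x \<epsilon>. 0 < \<epsilon> \<Longrightarrow> \<exists>k. dist (zs k) x < \<epsilon>"
    and near: "\<And>n. tdist y (tdir (real n) y (w n)) v
                 \<le> (INF k. tdist y v (tdir (real n) y (zs k))) + tnorm y v / real (Suc n)"
  shows "(\<lambda>n. tdist y (tdir (real n) y (w n)) v) \<longlonglongrightarrow> 0"
    and "tnorm y (tdir (real n) y (w n)) \<le> 3 * tnorm y v"
proof -
  have tn: "0 \<le> tnorm y v" by (rule tnorm_nonneg[OF c v])
  show "(\<lambda>n. tdist y (tdir (real n) y (w n)) v) \<longlonglongrightarrow> 0"
  proof (rule tendsto_sandwich)
    show "\<forall>\<^sub>F n in sequentially. (0::real) \<le> tdist y (tdir (real n) y (w n)) v"
      using tdist_nonneg[OF c tdir_tcone[OF c] v] by (intro always_eventually allI) simp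
    show "\<forall>\<^sub>F n in sequentially. tdist y (tdir (real n) y (w n)) v
        \<le> (INF k. tdist y v (tdir (real n) y (zs k))) + tnorm y v * inverse (real (Suc n))"
      using near by (intro always_eventually allI) (simp add: divide_inverse)
    show "(\<lambda>n. (INF k. tdist y v (tdir (real n) y (zs k))) + tnorm y v * inverse (real (Suc n))) \<longlonglongrightarrow> 0"
      using tendsto_add[OF INF_tdist_tdir_tendsto_0[OF c v dense]
          tendsto_mult_right_zero[OF LIMSEQ_inverse_real_of_nat]] by simp
  qed simp
  have "tnorm y (tdir (real n) y (w n)) \<le> tdist y (tdir (real n) y (w n)) v + tnorm y v"
    using tdist_triangle[OF c tdir_tcone[OF c] v tzero_tcone] unfolding tnorm_def by simp
  moreover have "tnorm y v / real (Suc n) \<le> tnorm y v / 1"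
    using tn by (intro divide_left_mono) auto
  ultimately show "tnorm y (tdir (real n) y (w n)) \<le> 3 * tnorm y v"
    using near[of n] INF_tdist_tdir_le_tnorm[OF c v dense, of n] by linarith
qed

section \<open>Measurability of sections\<close>

definition dense_seq :: "nat \<Rightarrow> 'a::{metric_space,second_countable_topology}" where
  "dense_seq = (SOME zs. \<forall>x \<epsilon>. 0 < \<epsilon> \<longrightarrow> (\<exists>k. dist (zs k) x < \<epsilon>))"

lemma dense_seq: "0 < \<epsilon> \<Longrightarrow> \<exists>k. dist (dense_seq k) x < \<epsilon>"
proof -
  obtain D :: "'a set" where D: "countable D" "\<And>X. open X \<Longrightarrow> X \<noteq> {} \<Longrightarrow> \<exists>d\<in>D. d \<in> X"
    using countable_dense_setE by blast
  have "\<exists>k. dist (from_nat_into D k) x < \<epsilon>" if \<epsilon>: "0 < \<epsilon>" for x :: 'a and \<epsilon>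
  proof -
    obtain d where "d \<in> D" "d \<in> ball x \<epsilon>" using D(2)[of "ball x \<epsilon>"] \<epsilon> by auto
    then show ?thesis using D(1) by (metis dist_commute from_nat_into_to_nat_on mem_ball)
  qed
  then have "\<exists>zs :: nat \<Rightarrow> 'a. \<forall>x \<epsilon>. 0 < \<epsilon> \<longrightarrow> (\<exists>k. dist (zs k) x < \<epsilon>)" by blast
  from someI_ex[OF this] show "0 < \<epsilon> \<Longrightarrow> \<exists>k. dist (dense_seq k) x < \<epsilon>"
    unfolding dense_seq_def by blast
qed

lemma second_countable_euclidean: "second_countable (euclidean :: 'a::second_countable_topology topology)"
proof -
  obtain B :: "'a set set" where B: "countable B" "topological_basis B" using ex_countable_basis by blast
  show ?thesis unfolding second_countable_def
  proof (intro exI[of _ B] conjI ballI allI impI)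
    show "countable B" by (rule B(1))
    fix V assume "V \<in> B" then show "openin euclidean V" using B(2) by (simp add: topological_basis_open)
  next
    fix U and x :: 'a assume "openin euclidean U \<and> x \<in> U"
    then show "\<exists>V\<in>B. x \<in> V \<and> V \<subseteq> U" using topological_basisE[OF B(2)] by (metis open_openin)
  qed
qed

lemma borel_esv_iff_measurable:
  "borel_esv m \<Omega> (v :: 'x::topological_space \<Rightarrow> 'y::{metric_space,second_countable_topology})
    \<longleftrightarrow> v \<in> borel_measurable (restrict_space borel \<Omega>)"
proof -
  have "separable_space (subtopology euclidean (v ` \<Omega>))"
    by (intro second_countable_imp_separable_space second_countable_subtopology second_countable_euclidean)
  then have "ess_sep_valued m \<Omega> v" unfolding ess_sep_valued_def by (intro bexI[of _ "{}"]) auto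
  then show ?thesis unfolding borel_esv_def by blast
qed

lemma measurable_if_LEAST:
  fixes C :: "nat \<Rightarrow> 'a \<Rightarrow> bool" and zs :: "nat \<Rightarrow> 'b::topological_space"
  assumes C: "\<And>k. Measurable.pred M (C k)" and d: "d \<in> borel_measurable M"
  shows "(\<lambda>x. if \<exists>k. C k x then zs (LEAST k. C k x) else d x) \<in> borel_measurable M"
proof (rule measurable_If[OF _ d])
  have "(\<lambda>x. LEAST k. C k x) \<in> measurable M (count_space UNIV)"
    by (rule measurable_Least) (rule C)
  then show "(\<lambda>x. zs (LEAST k. C k x)) \<in> borel_measurable M"
    using measurable_compose_countable'[where f = "\<lambda>k x. zs k" and I = UNIV] by simp
  have "Measurable.pred M (\<lambda>x. \<exists>k. C k x)" by (rule pred_intros_countable(2)[OF C])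
  then show "{x \<in> space M. \<exists>k. C k x} \<in> sets M" by (simp add: pred_def)
qed

locale measurable_tangent_section =
  fixes u :: "'x::topological_space \<Rightarrow> 'y::polish_space" and \<Omega> :: "'x set" and T :: "'x \<Rightarrow> 'y tvec"
  assumes cat0: "cat0 TYPE('y)"
    and u_measurable: "u \<in> borel_measurable (restrict_space borel \<Omega>)"
    and T_tcone: "\<And>x. x \<in> \<Omega> \<Longrightarrow> T x \<in> tcone (u x)"
    and tinner_measurable:
      "\<And>z. (\<lambda>x. tinner (u x) (T x) (tdir 1 (u x) z)) \<in> borel_measurable (restrict_space borel \<Omega>)"
begin

lemma measurable_tinner_tdir1:
  assumes v: "v \<in> borel_measurable (restrict_space borel \<Omega>)"
  shows "(\<lambda>x. tinner (u x) (T x) (tdir 1 (u x) (v x))) \<in> borel_measurable (restrict_space borel \<Omega>)"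
proof -
  let ?M = "restrict_space borel \<Omega>"
  define idx where "idx k x = (LEAST j. dist (v x) (dense_seq j) < inverse (real (Suc k)))" for k x
  have "idx k \<in> measurable ?M (count_space UNIV)" for k
    unfolding idx_def using v by measurable
  then have approx_measurable:
    "(\<lambda>x. tinner (u x) (T x) (tdir 1 (u x) (dense_seq (idx k x)))) \<in> borel_measurable ?M" for k
    using measurable_compose_countable'[where f = "\<lambda>j x. tinner (u x) (T x) (tdir 1 (u x) (dense_seq j))"
        and g = "idx k" and I = UNIV] tinner_measurable by simp
  have conv: "(\<lambda>k. dense_seq (idx k x)) \<longlonglongrightarrow> v x" for x
  proof -
    have "dist (v x) (dense_seq (idx k x)) < inverse (real (Suc k))" for k
      unfolding idx_def by (rule LeastI_ex) (use dense_seq[of "inverse (real (Suc k))" "v x"] in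
        \<open>auto simp: dist_commute\<close>)
    then have "(\<lambda>k. dist (dense_seq (idx k x)) (v x)) \<longlonglongrightarrow> 0"
      by (intro Lim_null_comparison[OF _ LIMSEQ_inverse_real_of_nat] always_eventually allI)
        (simp add: dist_commute less_imp_le)
    then show ?thesis using tendsto_dist_iff by blast
  qed
  show ?thesis
  proof (rule borel_measurable_LIMSEQ_real[where
        u = "\<lambda>k x. tinner (u x) (T x) (tdir 1 (u x) (dense_seq (idx k x)))", OF _ approx_measurable])
    fix x assume "x \<in> space ?M"
    then have "x \<in> \<Omega>" by (simp add: space_restrict_space)
    then show "(\<lambda>k. tinner (u x) (T x) (tdir 1 (u x) (dense_seq (idx k x))))
        \<longlonglongrightarrow> tinner (u x) (T x) (tdir 1 (u x) (v x))"
      by (rule tinner_tdir1_continuous[OF cat0 T_tcone conv])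
  qed
qed

lemma measurable_tnorm: "(\<lambda>x. tnorm (u x) (T x)) \<in> borel_measurable (restrict_space borel \<Omega>)"
proof -
  let ?M = "restrict_space borel \<Omega>"
  define \<phi> where "\<phi> p x = 2 * real (fst p) * tinner (u x) (T x) (tdir 1 (u x) (dense_seq (snd p)))
      - (real (fst p))\<^sup>2 * (dist (u x) (dense_seq (snd p)))\<^sup>2" for p :: "nat \<times> nat" and x
  have sup: "(tnorm (u x) (T x))\<^sup>2 = (SUP p. \<phi> p x)" and bdd: "bdd_above (range (\<lambda>p. \<phi> p x))"
    if "x \<in> \<Omega>" for x
    using tnorm_sq_eq_SUP_tdir[OF cat0 T_tcone[OF that] dense_seq] unfolding \<phi>_def case_prod_beta
    by auto
  have "\<phi> p \<in> borel_measurable ?M" for p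
    using tinner_measurable u_measurable unfolding \<phi>_def by measurable
  then have "(\<lambda>x. SUP p. \<phi> p x) \<in> borel_measurable ?M"
    by (intro borel_measurable_cSUP) (auto simp: bdd space_restrict_space)
  then have "(\<lambda>x. sqrt (SUP p. \<phi> p x)) \<in> borel_measurable ?M" by measurable
  moreover have "sqrt (SUP p. \<phi> p x) = tnorm (u x) (T x)" if "x \<in> space ?M" for x
    using that sup tnorm_nonneg[OF cat0 T_tcone] by (simp add: space_restrict_space flip: sup)
  ultimately show ?thesis using measurable_cong by (metis (no_types, lifting))
qed

lemma measurable_tdist_tdir:
  assumes v: "v \<in> borel_measurable (restrict_space borel \<Omega>)" and al: "0 \<le> \<alpha>"
  shows "(\<lambda>x. tdist (u x) (T x) (tdir \<alpha> (u x) (v x))) \<in> borel_measurable (restrict_space borel \<Omega>)"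
proof -
  let ?M = "restrict_space borel \<Omega>"
  have "(\<lambda>x. sqrt ((tnorm (u x) (T x))\<^sup>2 + \<alpha>\<^sup>2 * (dist (u x) (v x))\<^sup>2
      - 2 * \<alpha> * tinner (u x) (T x) (tdir 1 (u x) (v x)))) \<in> borel_measurable ?M"
    using measurable_tinner_tdir1[OF v] measurable_tnorm u_measurable v by measurable
  moreover have "sqrt ((tnorm (u x) (T x))\<^sup>2 + \<alpha>\<^sup>2 * (dist (u x) (v x))\<^sup>2
      - 2 * \<alpha> * tinner (u x) (T x) (tdir 1 (u x) (v x))) = tdist (u x) (T x) (tdir \<alpha> (u x) (v x))"
    if "x \<in> space ?M" for x
  proof -
    have x: "x \<in> \<Omega>" using that by (simp add: space_restrict_space)
    have "0 \<le> tdist (u x) (T x) (tdir \<alpha> (u x) (v x))"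
      by (rule tdist_nonneg[OF cat0 T_tcone[OF x] tdir_tcone[OF cat0 al]])
    then show ?thesis unfolding tdist_tdir_cosine_law[OF cat0 T_tcone[OF x] al, symmetric] by simp
  qed
  ultimately show ?thesis using measurable_cong by (metis (no_types, lifting))
qed

text \<open>When no index is within the slack, \<open>T x\<close> has norm \<open>0\<close> and the trivial choice \<open>u x\<close> is exact.\<close>
lemma near_best_tdir_selection:
  obtains vs :: "nat \<Rightarrow> 'x \<Rightarrow> 'y"
  where "\<And>n. vs n \<in> borel_measurable (restrict_space borel \<Omega>)"
    and "\<And>n x. x \<in> \<Omega> \<Longrightarrow> tdist (u x) (tdir (real n) (u x) (vs n x)) (T x)
      \<le> (INF k. tdist (u x) (T x) (tdir (real n) (u x) (dense_seq k))) + tnorm (u x) (T x) / real (Suc n)"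
proof -
  let ?M = "restrict_space borel \<Omega>"
  define D where "D n x k = tdist (u x) (T x) (tdir (real n) (u x) (dense_seq k))" for n x k
  define C where "C n k x \<longleftrightarrow> D n x k < (INF k. D n x k) + tnorm (u x) (T x) / real (Suc n)" for n k x
  define vs where "vs n x = (if \<exists>k. C n k x then dense_seq (LEAST k. C n k x) else u x)" for n x
  have D_nonneg: "0 \<le> D n x k" if "x \<in> \<Omega>" for n x k
    unfolding D_def by (rule tdist_nonneg[OF cat0 T_tcone[OF that] tdir_tcone[OF cat0]]) simp
  have D_measurable: "(\<lambda>x. D n x k) \<in> borel_measurable ?M" for n k
    unfolding D_def by (rule measurable_tdist_tdir) auto
  have "(\<lambda>x. INF k. D n x k) \<in> borel_measurable ?M" for n
    unfolding D_def
    by (rule borel_measurable_cINF) (auto simp: D_measurable[unfolded D_def] space_restrict_space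
        intro: bdd_below_range_tdist[OF cat0 T_tcone tdir_tcone[OF cat0]])
  then have C_measurable: "Measurable.pred ?M (C n k)" for n k
    unfolding C_def using D_measurable measurable_tnorm by measurable
  have "vs n \<in> borel_measurable ?M" for n
    unfolding vs_def by (rule measurable_if_LEAST[OF C_measurable u_measurable])
  moreover have "tdist (u x) (tdir (real n) (u x) (vs n x)) (T x)
      \<le> (INF k. D n x k) + tnorm (u x) (T x) / real (Suc n)" if x: "x \<in> \<Omega>" for n x
  proof (cases "\<exists>k. C n k x")
    case True
    then have "C n (LEAST k. C n k x) x" by (rule LeastI_ex)
    then show ?thesis using True unfolding vs_def C_def D_def by (simp add: tdist_sym)
  next
    case False
    have "tnorm (u x) (T x) = 0"
    proof (rule ccontr)
      assume "tnorm (u x) (T x) \<noteq> 0"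
      then have "0 < tnorm (u x) (T x) / real (Suc n)" using tnorm_nonneg[OF cat0 T_tcone[OF x]] by simp
      then have "Inf (range (D n x)) < (INF k. D n x k) + tnorm (u x) (T x) / real (Suc n)" by simp
      moreover have "bdd_below (range (D n x))"
        unfolding D_def by (rule bdd_below_range_tdist[OF cat0 T_tcone[OF x] tdir_tcone[OF cat0]]) simp
      ultimately obtain k where "C n k x" unfolding C_def using cInf_less_iff by blast
      with False show False by blast
    qed
    moreover have "0 \<le> (INF k. D n x k)" by (rule cINF_greatest) (auto simp: D_nonneg[OF x])
    ultimately show ?thesis using False tdir_self[OF cat0] unfolding vs_def tnorm_def
      by (simp add: tdist_sym)
  qed
  ultimately show ?thesis using that unfolding D_def by blast
qed

lemma tdir_approximation:
  obtains vs :: "nat \<Rightarrow> 'x \<Rightarrow> 'y"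
  where "\<And>n. vs n \<in> borel_measurable (restrict_space borel \<Omega>)"
    and "\<And>x. x \<in> \<Omega> \<Longrightarrow> (\<lambda>n. tdist (u x) (tdir (real n) (u x) (vs n x)) (T x)) \<longlonglongrightarrow> 0"
    and "\<And>n x. x \<in> \<Omega> \<Longrightarrow> tnorm (u x) (tdir (real n) (u x) (vs n x)) \<le> 3 * tnorm (u x) (T x)"
proof -
  obtain vs where measurable: "\<And>n. vs n \<in> borel_measurable (restrict_space borel \<Omega>)"
    and near: "\<And>n x. x \<in> \<Omega> \<Longrightarrow> tdist (u x) (tdir (real n) (u x) (vs n x)) (T x)
      \<le> (INF k. tdist (u x) (T x) (tdir (real n) (u x) (dense_seq k))) + tnorm (u x) (T x) / real (Suc n)"
    using near_best_tdir_selection by blast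
  have "(\<lambda>n. tdist (u x) (tdir (real n) (u x) (vs n x)) (T x)) \<longlonglongrightarrow> 0" if "x \<in> \<Omega>" for x
    by (rule near_best_tdir_approx(1)[OF cat0 T_tcone[OF that] dense_seq near[OF that]])
  moreover have "tnorm (u x) (tdir (real n) (u x) (vs n x)) \<le> 3 * tnorm (u x) (T x)" if "x \<in> \<Omega>" for n x
    by (rule near_best_tdir_approx(2)[OF cat0 T_tcone[OF that] dense_seq near[OF that]])
  ultimately show ?thesis using that measurable by blast
qed

end

section \<open>Borel sections of the pullback bundle\<close>

lemma TG_generators_subset:
  "{fst -` B \<inter> TG | B. B \<in> sets (borel :: 'y measure)} \<union>
    {(\<lambda>(y, v). tinner y v (tdir 1 y z)) -` A \<inter> TG | z A. A \<in> sets (borel :: real measure)}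
   \<subseteq> Pow (TG :: ('y::metric_space \<times> 'y tvec) set)"
  by auto

lemma measurable_TG_tinner:
  "(\<lambda>(y, v). tinner y v (tdir 1 y z)) \<in> borel_measurable (TG_measure :: ('y::metric_space \<times> 'y tvec) measure)"
proof (rule measurableI)
  fix A :: "real set" assume "A \<in> sets borel"
  then show "(\<lambda>(y, v). tinner y v (tdir 1 y z)) -` A \<inter> space (TG_measure :: ('y \<times> 'y tvec) measure)
      \<in> sets TG_measure"
    unfolding TG_measure_def space_measure_of[OF TG_generators_subset] sets_measure_of[OF TG_generators_subset]
    by (intro sigma_sets.Basic) blast
qed simp

lemma measurable_TG_measureI:
  assumes u: "u \<in> borel_measurable M" and T: "\<And>x. x \<in> space M \<Longrightarrow> T x \<in> tcone (u x)"
    and Tm: "\<And>z. (\<lambda>x. tinner (u x) (T x) (tdir 1 (u x) z)) \<in> borel_measurable M"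
  shows "(\<lambda>x. (u x, T x)) \<in> measurable M (TG_measure :: ('y::metric_space \<times> 'y tvec) measure)"
  unfolding TG_measure_def
proof (rule measurable_measure_of[OF TG_generators_subset])
  show "(\<lambda>x. (u x, T x)) \<in> space M \<rightarrow> TG" using T unfolding TG_def by auto
  fix G assume "G \<in> {fst -` B \<inter> TG | B. B \<in> sets (borel :: 'y measure)} \<union>
    {(\<lambda>(y, v). tinner y v (tdir 1 y z)) -` A \<inter> TG | z A. A \<in> sets (borel :: real measure)}"
  then show "(\<lambda>x. (u x, T x)) -` G \<inter> space M \<in> sets M"
  proof (elim UnE CollectE exE conjE)
    fix B :: "'y set" assume "G = fst -` B \<inter> TG" "B \<in> sets borel"
    moreover have "(\<lambda>x. (u x, T x)) -` (fst -` B \<inter> TG) \<inter> space M = u -` B \<inter> space M"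
      using T unfolding TG_def by auto
    ultimately show ?thesis using measurable_sets[OF u] by simp
  next
    fix z :: 'y and A :: "real set"
    assume "G = (\<lambda>(y, v). tinner y v (tdir 1 y z)) -` A \<inter> TG" "A \<in> sets borel"
    moreover have "(\<lambda>x. (u x, T x)) -` ((\<lambda>(y, v). tinner y v (tdir 1 y z)) -` A \<inter> TG) \<inter> space M
        = (\<lambda>x. tinner (u x) (T x) (tdir 1 (u x) z)) -` A \<inter> space M"
      using T unfolding TG_def by auto
    ultimately show ?thesis using measurable_sets[OF Tm] by simp
  qed
qed

lemma borel_section_iff:
  assumes u: "u \<in> borel_measurable (restrict_space borel \<Omega>)"
  shows "borel_section u \<Omega> (T :: 'x::topological_space \<Rightarrow> 'y::metric_space tvec) \<longleftrightarrow>
    (\<forall>x\<in>\<Omega>. T x \<in> tcone (u x)) \<and>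
    (\<forall>z. (\<lambda>x. tinner (u x) (T x) (tdir 1 (u x) z)) \<in> borel_measurable (restrict_space borel \<Omega>))"
proof (intro iffI conjI allI ballI; (elim conjE)?)
  let ?M = "restrict_space borel \<Omega>"
  assume bs: "borel_section u \<Omega> T"
  show "T x \<in> tcone (u x)" if "x \<in> \<Omega>" for x
    using measurable_space[OF bs[unfolded borel_section_def], of x] that
    by (auto simp: space_restrict_space pullback_measure_def pullback_set_def)
  fix z
  have "(\<lambda>p. (\<lambda>(y, v). tinner y v (tdir 1 y z)) (snd p)) \<in> borel_measurable (pullback_measure u \<Omega>)"
    unfolding pullback_measure_def
    by (rule measurable_restrict_space1, rule measurable_compose[OF measurable_snd measurable_TG_tinner])
  from measurable_compose[OF bs[unfolded borel_section_def] this]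
  show "(\<lambda>x. tinner (u x) (T x) (tdir 1 (u x) z)) \<in> borel_measurable ?M" by simp
next
  let ?M = "restrict_space borel \<Omega>"
  assume T: "\<forall>x\<in>\<Omega>. T x \<in> tcone (u x)"
    and Tm: "\<forall>z. (\<lambda>x. tinner (u x) (T x) (tdir 1 (u x) z)) \<in> borel_measurable ?M"
  have "(\<lambda>x. (u x, T x)) \<in> measurable ?M TG_measure"
    using T Tm by (intro measurable_TG_measureI[OF u]) (auto simp: space_restrict_space)
  then have "(\<lambda>x. (x, u x, T x)) \<in> measurable ?M (borel \<Otimes>\<^sub>M TG_measure)"
    by (rule measurable_Pair[OF measurable_restrict_space1[OF measurable_id]])
  moreover have "(\<lambda>x. (x, u x, T x)) \<in> space ?M \<rightarrow> pullback_set u \<Omega>"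
    using T unfolding pullback_set_def by (auto simp: space_restrict_space)
  ultimately show "borel_section u \<Omega> T"
    unfolding borel_section_def pullback_measure_def by (intro measurable_restrict_space2)
qed

section \<open>Square integrable sections\<close>

lemma borel_measurable_restrict_space_sets_cong:
  assumes "sets m = sets borel"
  shows "borel_measurable (restrict_space m \<Omega>) = borel_measurable (restrict_space borel \<Omega>)"
  using assms by (intro measurable_cong_sets sets_restrict_space_cong) auto

lemma nn_integral_sq_le_mult:
  assumes g: "g \<in> borel_measurable M" and f: "\<And>x. x \<in> space M \<Longrightarrow> 0 \<le> f x \<and> f x \<le> c * g x"
  shows "(\<integral>\<^sup>+ x. ennreal ((f x)\<^sup>2) \<partial>M) \<le> ennreal (c\<^sup>2) * (\<integral>\<^sup>+ x. ennreal ((g x)\<^sup>2) \<partial>M)"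
proof -
  have "(\<integral>\<^sup>+ x. ennreal ((f x)\<^sup>2) \<partial>M) \<le> (\<integral>\<^sup>+ x. ennreal (c\<^sup>2) * ennreal ((g x)\<^sup>2) \<partial>M)"
  proof (rule nn_integral_mono)
    fix x assume "x \<in> space M"
    then have "(f x)\<^sup>2 \<le> (c * g x)\<^sup>2" using f by (auto intro: power_mono)
    then show "ennreal ((f x)\<^sup>2) \<le> ennreal (c\<^sup>2) * ennreal ((g x)\<^sup>2)"
      by (simp add: power_mult_distrib ennreal_leI flip: ennreal_mult)
  qed
  also have "\<dots> = ennreal (c\<^sup>2) * (\<integral>\<^sup>+ x. ennreal ((g x)\<^sup>2) \<partial>M)"
    using g by (intro nn_integral_cmult) measurable
  finally show ?thesis .
qed

lemma L2_section_rep_imp_borel_section: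
  assumes c: "cat0 TYPE('y::polish_space)"
    and u: "u \<in> borel_measurable (restrict_space borel \<Omega>)"
    and S: "L2_section_rep m \<Omega> u (S :: 'x::topological_space \<Rightarrow> 'y tvec)"
  shows "borel_section u \<Omega> S"
proof -
  let ?M = "restrict_space borel \<Omega>"
  have "\<forall>\<alpha>\<ge>0. \<forall>v. v \<in> borel_measurable ?M \<longrightarrow> (\<lambda>x. tdist (u x) (S x) (tdir \<alpha> (u x) (v x))) \<in> borel_measurable ?M"
    using S unfolding L2_section_rep_def borel_esv_iff_measurable by blast
  then have tdist_measurable: "(\<lambda>x. tdist (u x) (S x) (tdir \<alpha> (u x) z)) \<in> borel_measurable ?M"
    if "0 \<le> \<alpha>" for \<alpha> z
    using that by (auto dest: spec[of _ "\<lambda>x. z"])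
  have "(\<lambda>x. tinner (u x) (S x) (tdir 1 (u x) z)) \<in> borel_measurable ?M" for z
  proof -
    have "(\<lambda>x. ((tdist (u x) (S x) (tdir 0 (u x) z))\<^sup>2 + (dist (u x) z)\<^sup>2
        - (tdist (u x) (S x) (tdir 1 (u x) z))\<^sup>2) / 2) \<in> borel_measurable ?M"
      using tdist_measurable[of 0 z] tdist_measurable[of 1 z] u by measurable
    then show ?thesis unfolding tinner_tdir1[OF c] tdir_0[OF c] tnorm_def .
  qed
  moreover have "\<forall>x\<in>\<Omega>. S x \<in> tcone (u x)" using S unfolding L2_section_rep_def by blast
  ultimately show ?thesis using borel_section_iff[OF u] by blast
qed

lemma L2_section_rep_tnorm_sq_finite:
  assumes c: "cat0 TYPE('y::polish_space)" and sets: "sets m = sets borel"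
    and u: "u \<in> borel_measurable (restrict_space borel \<Omega>)"
    and S: "L2_section_rep m \<Omega> u (S :: 'x::topological_space \<Rightarrow> 'y tvec)"
  shows "(\<integral>\<^sup>+ x. ennreal ((tnorm (u x) (S x))\<^sup>2) \<partial>(restrict_space m \<Omega>)) < \<infinity>"
proof -
  let ?N = "restrict_space m \<Omega>"
  obtain \<alpha> :: "nat \<Rightarrow> real" and vs :: "nat \<Rightarrow> 'x \<Rightarrow> 'y"
    where \<alpha>: "\<And>n. 0 \<le> \<alpha> n" and vs: "\<And>n. vs n \<in> borel_measurable (restrict_space borel \<Omega>)"
      and sup: "(SUP n. dL2sq m \<Omega> u (\<lambda>x. tdir (\<alpha> n) (u x) (vs n x)) (\<lambda>x. tzero (u x))) < \<infinity>"
      and conv: "\<And>x. x \<in> \<Omega> \<Longrightarrow> (\<lambda>n. tdist (u x) (tdir (\<alpha> n) (u x) (vs n x)) (S x)) \<longlonglongrightarrow> 0"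
    using S unfolding L2_section_rep_def borel_esv_iff_measurable by blast
  have S_tcone: "x \<in> \<Omega> \<Longrightarrow> S x \<in> tcone (u x)" for x using S unfolding L2_section_rep_def by blast
  define g where "g n x = ennreal ((tnorm (u x) (tdir (\<alpha> n) (u x) (vs n x)))\<^sup>2)" for n x
  have g_measurable: "g n \<in> borel_measurable ?N" for n
  proof -
    have "(\<lambda>x. ennreal ((\<alpha> n * dist (u x) (vs n x))\<^sup>2)) \<in> borel_measurable (restrict_space borel \<Omega>)"
      using u vs by measurable
    moreover have "g n = (\<lambda>x. ennreal ((\<alpha> n * dist (u x) (vs n x))\<^sup>2))"
      unfolding g_def using tnorm_tdir[OF c \<alpha>] by simp
    ultimately show ?thesis by (simp add: borel_measurable_restrict_space_sets_cong[OF sets])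
  qed
  have g_liminf: "ennreal ((tnorm (u x) (S x))\<^sup>2) = liminf (\<lambda>n. g n x)" if "x \<in> \<Omega>" for x
  proof -
    have "(\<lambda>n. tnorm (u x) (tdir (\<alpha> n) (u x) (vs n x))) \<longlonglongrightarrow> tnorm (u x) (S x)"
      by (rule tendsto_tnorm[OF c tdir_tcone[OF c \<alpha>] S_tcone[OF that] conv[OF that]])
    then have "(\<lambda>n. g n x) \<longlonglongrightarrow> ennreal ((tnorm (u x) (S x))\<^sup>2)"
      unfolding g_def by (intro tendsto_ennrealI tendsto_power)
    then show ?thesis by (simp add: lim_imp_Liminf)
  qed
  have "(\<integral>\<^sup>+ x. ennreal ((tnorm (u x) (S x))\<^sup>2) \<partial>?N) = (\<integral>\<^sup>+ x. liminf (\<lambda>n. g n x) \<partial>?N)"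
    by (rule nn_integral_cong) (simp add: g_liminf space_restrict_space)
  also have "\<dots> \<le> liminf (\<lambda>n. \<integral>\<^sup>+ x. g n x \<partial>?N)"
    by (rule nn_integral_liminf[OF g_measurable])
  also have "\<dots> \<le> (SUP n. \<integral>\<^sup>+ x. g n x \<partial>?N)"
    unfolding liminf_SUP_INF by (intro SUP_mono) (auto intro: INF_lower)
  also have "\<dots> = (SUP n. dL2sq m \<Omega> u (\<lambda>x. tdir (\<alpha> n) (u x) (vs n x)) (\<lambda>x. tzero (u x)))"
    unfolding dL2sq_def g_def tnorm_def ..
  finally show ?thesis using sup by simp
qed

lemma borel_section_imp_L2_section_rep:
  assumes c: "cat0 TYPE('y::polish_space)" and sets: "sets m = sets borel"
    and u: "u \<in> borel_measurable (restrict_space borel \<Omega>)"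
    and T: "borel_section u \<Omega> (T :: 'x::topological_space \<Rightarrow> 'y tvec)"
    and fin: "(\<integral>\<^sup>+ x. ennreal ((tnorm (u x) (T x))\<^sup>2) \<partial>(restrict_space m \<Omega>)) < \<infinity>"
  shows "L2_section_rep m \<Omega> u T"
proof -
  let ?M = "restrict_space borel \<Omega>"
  let ?N = "restrict_space m \<Omega>"
  interpret measurable_tangent_section u \<Omega> T
    using c u T unfolding borel_section_iff[OF u] by unfold_locales auto
  obtain vs where vs: "\<And>n. vs n \<in> borel_measurable ?M"
    and conv: "\<And>x. x \<in> \<Omega> \<Longrightarrow> (\<lambda>n. tdist (u x) (tdir (real n) (u x) (vs n x)) (T x)) \<longlonglongrightarrow> 0"
    and bound: "\<And>n x. x \<in> \<Omega> \<Longrightarrow> tnorm (u x) (tdir (real n) (u x) (vs n x)) \<le> 3 * tnorm (u x) (T x)"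
    using tdir_approximation by blast
  have "(\<lambda>x. tnorm (u x) (T x)) \<in> borel_measurable ?N"
    using measurable_tnorm by (simp add: borel_measurable_restrict_space_sets_cong[OF sets])
  then have "dL2sq m \<Omega> u (\<lambda>x. tdir (real n) (u x) (vs n x)) (\<lambda>x. tzero (u x))
      \<le> ennreal (3\<^sup>2) * (\<integral>\<^sup>+ x. ennreal ((tnorm (u x) (T x))\<^sup>2) \<partial>?N)" for n
    unfolding dL2sq_def tnorm_def[symmetric]
    by (rule nn_integral_sq_le_mult)
      (auto simp: space_restrict_space bound tnorm_nonneg[OF cat0 tdir_tcone[OF cat0]])
  then have "(SUP n. dL2sq m \<Omega> u (\<lambda>x. tdir (real n) (u x) (vs n x)) (\<lambda>x. tzero (u x)))
      \<le> ennreal (3\<^sup>2) * (\<integral>\<^sup>+ x. ennreal ((tnorm (u x) (T x))\<^sup>2) \<partial>?N)"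
    by (rule SUP_least)
  also have "\<dots> < \<infinity>" using fin by (simp add: ennreal_mult_less_top)
  finally have sup: "(SUP n. dL2sq m \<Omega> u (\<lambda>x. tdir (real n) (u x) (vs n x)) (\<lambda>x. tzero (u x))) < \<infinity>" .
  show ?thesis
    unfolding L2_section_rep_def borel_esv_iff_measurable
  proof (intro conjI allI impI ballI)
    show "\<And>x. x \<in> \<Omega> \<Longrightarrow> T x \<in> tcone (u x)" by (rule T_tcone)
    show "\<And>\<alpha> v. 0 \<le> \<alpha> \<Longrightarrow> v \<in> borel_measurable ?M \<Longrightarrow>
        (\<lambda>x. tdist (u x) (T x) (tdir \<alpha> (u x) (v x))) \<in> borel_measurable ?M"
      by (rule measurable_tdist_tdir)
    show "\<exists>(\<alpha> :: nat \<Rightarrow> real) (vs :: nat \<Rightarrow> 'x \<Rightarrow> 'y). (\<forall>n. 0 \<le> \<alpha> n \<and> vs n \<in> borel_measurable ?M) \<and>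
        (SUP n. dL2sq m \<Omega> u (\<lambda>x. tdir (\<alpha> n) (u x) (vs n x)) (\<lambda>x. tzero (u x))) < \<infinity> \<and>
        (\<forall>x\<in>\<Omega>. (\<lambda>n. tdist (u x) (tdir (\<alpha> n) (u x) (vs n x)) (T x)) \<longlonglongrightarrow> 0)"
      using vs sup conv by (intro exI[of _ real] exI[of _ vs]) auto
  qed
qed

text \<open>Only the Borel measurability of \<open>u\<close> is used: neither the openness of \<open>\<Omega>\<close> nor the
  integrability of \<open>d\<^sup>2(u, ybar)\<close> plays a role.\<close>
theorem proposition4p8:
  fixes m :: "'x::polish_space measure"
    and ybar :: "'y::polish_space"
    and \<Omega> :: "'x set"
    and u :: "'x \<Rightarrow> 'y"
    and S :: "'x \<Rightarrow> 'y tvec"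
  assumes "mm_space m"
    and "cat0 TYPE('y)"
    and "open \<Omega>"
    and "L2_map m \<Omega> ybar u"
    and "\<forall>x\<in>\<Omega>. S x \<in> tcone (u x)"
  shows "(\<exists>S'. L2_section_rep m \<Omega> u S' \<and> ae_eq_section m \<Omega> u S S') \<longleftrightarrow>
         (\<exists>T. borel_section u \<Omega> T \<and>
              (\<integral>\<^sup>+ x. ennreal ((tnorm (u x) (T x))\<^sup>2) \<partial>(restrict_space m \<Omega>)) < \<infinity> \<and>
              ae_eq_section m \<Omega> u S T)"
proof -
  note c = \<open>cat0 TYPE('y)\<close>
  have sets: "sets m = sets borel" using \<open>mm_space m\<close> unfolding mm_space_def by blast
  have u: "u \<in> borel_measurable (restrict_space borel \<Omega>)"
    using \<open>L2_map m \<Omega> ybar u\<close> unfolding L2_map_def borel_esv_def by blast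
  show ?thesis
  proof
    assume "\<exists>S'. L2_section_rep m \<Omega> u S' \<and> ae_eq_section m \<Omega> u S S'"
    then show "\<exists>T. borel_section u \<Omega> T \<and>
        (\<integral>\<^sup>+ x. ennreal ((tnorm (u x) (T x))\<^sup>2) \<partial>(restrict_space m \<Omega>)) < \<infinity> \<and> ae_eq_section m \<Omega> u S T"
      using L2_section_rep_imp_borel_section[OF c u] L2_section_rep_tnorm_sq_finite[OF c sets u] by blast
  next
    assume "\<exists>T. borel_section u \<Omega> T \<and>
        (\<integral>\<^sup>+ x. ennreal ((tnorm (u x) (T x))\<^sup>2) \<partial>(restrict_space m \<Omega>)) < \<infinity> \<and> ae_eq_section m \<Omega> u S T"
    then show "\<exists>S'. L2_section_rep m \<Omega> u S' \<and> ae_eq_section m \<Omega> u S S'"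
      using borel_section_imp_L2_section_rep[OF c sets u] by blast
  qed
qed

end
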